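(* Let $\widehat{\mathcal W}_k\subseteq\mathcal W'_k$ be the $\mathbb C(\lambda)$-subspace generated by the classes of those $x^u$, $u\in M_k$, for which $u$ is an interior point of $C(A)$. Then $\dim_{\mathbb C(\lambda)}\widehat{\mathcal W}_k=R_k$.
   Context: Let $A=\{\mathbf a_1,\dots,\mathbf a_m\}\subseteq\mathbb Z^n$ be linearly independent over $\mathbb R$, $\mathbf a_0\in\mathbb Z^n$, and $\ell_0,\dots,\ell_m$ positive integers with gcd $1$, $\ell_0\mathbf a_0=\sum_{j=1}^m\ell_j\mathbf a_j$, $\ell_0=\sum_{j=1}^m\ell_j$. Let $f_\lambda=\sum_{j=1}^m\ell_jx^{\mathbf a_j}-\ell_0\lambda x^{\mathbf a_0}$. Let $V$ be the real span of $A$, $V_{\mathbb Z}=V\cap\mathbb Z^n$, $C(A)$ the closed real cone generated by $A$ (interior relative to $V$), $M=V_{\mathbb Z}\cap C(A)$, $\mathbb ZA_+$ the group generated by $A\cup\{\mathbf a_0\}$. Fix a coset $\mathcal C_k$ of $\mathbb ZA_+$ in $V_{\mathbb Z}$, $M_k=M\cap\mathcal C_k$, $S'_k$ the $\mathbb C(\lambda)$-span of $\{x^u:u\in M_k\}$, $D_i=x_i\partial/\partial x_i+x_i\partial f_\lambda/\partial x_i$ ($i=1,\dots,n$), and $\mathcal W'_k=S'_k/\sum_iD_iS'_k$. Let $P(A)=\{\sum_jc_j\mathbf a_j:0\le c_j<1\}$, $\mathcal B=V_{\mathbb Z}\cap P(A)$, $\mathcal B_k=\mathcal B\cap\mathcal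 C_k$, and $R_k$ the number of elements $\sum_jv_j\mathbf a_j$ of $\mathcal B_k$ with all $v_j>0$. *)

theory Defs
  imports "HOL-Analysis.Analysis" "HOL-Computational_Algebra.Polynomial"
    "HOL-Computational_Algebra.Fraction_Field"
begin

type_synonym K = "complex poly fract"

definition lam :: K where "lam = Fract [:0, 1:] 1"

definition rv :: "int ^ 'n \<Rightarrow> real ^ 'n" where
  "rv v = (\<chi> i. real_of_int (v $ i))"

definition VZ :: "(nat \<Rightarrow> int ^ 'n) \<Rightarrow> nat \<Rightarrow> (int ^ 'n) set" where
  "VZ a m = {v. rv v \<in> span (rv ` a ` {1..m})}"

definition coneA :: "(nat \<Rightarrow> int ^ 'n) \<Rightarrow> nat \<Rightarrow> (real ^ 'n) set" where
  "coneA a m = {x. \<exists>c. (\<forall>j\<in>{1..m}. 0 \<le> c j) \<and> x = (\<Sum>j=1..m. c j *\<^sub>R rv (a j))}"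

definition Mset :: "(nat \<Rightarrow> int ^ 'n) \<Rightarrow> nat \<Rightarrow> (int ^ 'n) set" where
  "Mset a m = {v \<in> VZ a m. rv v \<in> coneA a m}"

definition ZAplus :: "(nat \<Rightarrow> int ^ 'n) \<Rightarrow> nat \<Rightarrow> (int ^ 'n) set" where
  "ZAplus a m = {(\<chi> i. \<Sum>j=0..m. z j * a j $ i) | z. True}"

definition PA :: "(nat \<Rightarrow> int ^ 'n) \<Rightarrow> nat \<Rightarrow> (real ^ 'n) set" where
  "PA a m = {x. \<exists>c. (\<forall>j\<in>{1..m}. 0 \<le> c j \<and> c j < 1) \<and> x = (\<Sum>j=1..m. c j *\<^sub>R rv (a j))}"

definition Bset :: "(nat \<Rightarrow> int ^ 'n) \<Rightarrow> nat \<Rightarrow> (int ^ 'n) set" where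
  "Bset a m = {v \<in> VZ a m. rv v \<in> PA a m}"

definition Rk :: "(nat \<Rightarrow> int ^ 'n) \<Rightarrow> nat \<Rightarrow> (int ^ 'n) set \<Rightarrow> nat" where
  "Rk a m Ck = card {v \<in> Bset a m \<inter> Ck.
      \<exists>c. (\<forall>j\<in>{1..m}. 0 < c j) \<and> rv v = (\<Sum>j=1..m. c j *\<^sub>R rv (a j))}"

text \<open>Elements of S'_k are finitely supported coefficient functions u \<mapsto> coefficient of x^u.\<close>
definition Sk :: "(int ^ 'n) set \<Rightarrow> (int ^ 'n \<Rightarrow> K) set" where
  "Sk Mk = {g. finite {v. g v \<noteq> 0} \<and> {v. g v \<noteq> 0} \<subseteq> Mk}"

definition xmon :: "int ^ 'n \<Rightarrow> (int ^ 'n \<Rightarrow> K)" where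
  "xmon u = (\<lambda>v. if v = u then 1 else 0)"

text \<open>D_i = x_i d/dx_i + x_i (d f_lambda / d x_i), acting on coefficient functions, where
  f_lambda = sum_j l j x^(a j) - l 0 lambda x^(a 0).\<close>
definition Dop :: "(nat \<Rightarrow> int ^ 'n) \<Rightarrow> (nat \<Rightarrow> nat) \<Rightarrow> nat \<Rightarrow> 'n \<Rightarrow>
    (int ^ 'n \<Rightarrow> K) \<Rightarrow> (int ^ 'n \<Rightarrow> K)" where
  "Dop a l m i g = (\<lambda>v. of_int (v $ i) * g v
      + (\<Sum>j=1..m. of_int (int (l j) * a j $ i) * g (v - a j))
      - of_int (int (l 0) * a 0 $ i) * lam * g (v - a 0))"

definition DImg :: "(nat \<Rightarrow> int ^ 'n) \<Rightarrow> (nat \<Rightarrow> nat) \<Rightarrow> nat \<Rightarrow> (int ^ 'n) set \<Rightarrow>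
    (int ^ 'n \<Rightarrow> K) set" where
  "DImg a l m Mk = {(\<lambda>v. \<Sum>i\<in>UNIV. Dop a l m i (G i) v) | G. \<forall>i. G i \<in> Sk Mk}"

definition kspan :: "('a \<Rightarrow> K) set \<Rightarrow> ('a \<Rightarrow> K) set" where
  "kspan X = {h. \<exists>F c. finite F \<and> F \<subseteq> X \<and> h = (\<lambda>v. \<Sum>b\<in>F. c b * b v)}"

text \<open>Dimension of the subspace of the quotient S/U generated by the classes of the elements of X
  equals d: there is a basis of d classes, i.e. a finite set B of d elements of span X whose
  classes are linearly independent modulo U and span the classes of X.\<close>
definition quot_dim_eq :: "('a \<Rightarrow> K) set \<Rightarrow> ('a \<Rightarrow> K) set \<Rightarrow> nat \<Rightarrow> bool" where
  "quot_dim_eq U X d \<longleftrightarrow> (\<exists>B. finite B \<and> card B = d \<and> B \<subseteq> kspan X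
     \<and> (\<forall>c. (\<lambda>v. \<Sum>b\<in>B. c b * b v) \<in> U \<longrightarrow> (\<forall>b\<in>B. c b = 0))
     \<and> (\<forall>x\<in>X. \<exists>c. (\<lambda>v. x v - (\<Sum>b\<in>B. c b * b v)) \<in> U))"

end

theory Submission
  imports Defs "HOL-Computational_Algebra.Polynomial_Factorial" "HOL-Computational_Algebra.Polynomial_FPS"
begin

(* Write u_j for the coordinates of u \<in> V in the basis A and let \<phi>_j be the dual basis.  The
   operators D'_j = \<Sum>_i \<phi>_j,i D_i act on monomials by
     D'_j x^v = v_j x^v + l_j x^(v + a_j) - l_j \<lambda> x^(v + a_0).
   Applied to v = u - a_j, this trades an interior monomial x^u with u_j \<ge> 1 for \<lambda> x^(u - a_j + a_0),
   modulo \<Sum>_i D_i S'_k and interior monomials of smaller weight \<Sum>_j u_j.  Trading preserves the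
   weight and there are only finitely many lattice points of a given weight, so a chain of trades
   returns to its start: (1 - \<lambda>^r) x^u is congruent to a combination of the box monomials x^b,
   b \<in> B_k with all b_j > 0.
   For independence, clear denominators and pair a relation with formal power series solutions
   \<Phi>_e of the adjoint system, one for each box point e, normalised by \<Phi>_e(b) = \<delta>_be mod \<lambda>;
   comparing lowest order terms kills the relation. *)

lemma rv_add: "rv (x + y) = rv x + rv y"
  by (simp add: rv_def vec_eq_iff)

lemma rv_diff: "rv (x - y) = rv x - rv y"
  by (simp add: rv_def vec_eq_iff)

lemma rv_inj: "rv x = rv y \<Longrightarrow> x = y"
  by (simp add: rv_def vec_eq_iff)

lemma finite_bounded_int_vectors: "finite {v :: int ^ 'n. \<forall>i. \<bar>v $ i\<bar> \<le> R}"
proof -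
  have "v \<in> vec_lambda ` (UNIV \<rightarrow>\<^sub>E {-R..R})" if "\<forall>i. \<bar>v $ i\<bar> \<le> R" for v :: "int ^ 'n"
  proof (rule image_eqI)
    show "v = vec_lambda (vec_nth v)" by simp
    have "v $ i \<in> {-R..R}" for i
      using that[rule_format, of i] by (simp add: abs_le_iff)
    then show "vec_nth v \<in> UNIV \<rightarrow>\<^sub>E {-R..R}" by auto
  qed
  then have "{v :: int ^ 'n. \<forall>i. \<bar>v $ i\<bar> \<le> R} \<subseteq> vec_lambda ` (UNIV \<rightarrow>\<^sub>E {-R..R})"
    by blast
  moreover have "finite (UNIV \<rightarrow>\<^sub>E {-R..R} :: ('n \<Rightarrow> int) set)"
    by (rule finite_PiE) auto
  ultimately show ?thesis
    using finite_subset by blast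
qed

lemma dual_basis_exists:
  fixes b :: "'i \<Rightarrow> 'a::euclidean_space"
  assumes inj: "inj_on b I" and indep: "independent (b ` I)"
  shows "\<exists>\<phi>. \<forall>j\<in>I. \<forall>k\<in>I. \<phi> j \<bullet> b k = (if j = k then 1 else 0)"
proof -
  have "\<forall>j. \<exists>f. linear f \<and> (\<forall>x\<in>b ` I. f x = (if x = b j then (1::real) else 0))"
  proof
    fix j
    show "\<exists>f. linear f \<and> (\<forall>x\<in>b ` I. f x = (if x = b j then (1::real) else 0))"
      by (rule linear_independent_extend[OF indep])
  qed
  then have "\<exists>f. \<forall>j. linear (f j) \<and> (\<forall>x\<in>b ` I. f j x = (if x = b j then (1::real) else 0))"
    by (rule choice)
  then obtain f where f: "\<And>j. linear (f j)"
    and f_b: "\<And>j x. x \<in> b ` I \<Longrightarrow> f j x = (if x = b j then (1::real) else 0)"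
    by blast
  have "adjoint (f j) 1 \<bullet> b k = (if j = k then 1 else 0)" if "j \<in> I" "k \<in> I" for j k
  proof -
    have "adjoint (f j) 1 \<bullet> b k = f j (b k)"
      using adjoint_works[OF f[of j], of "b k" 1] by (simp add: inner_commute[of _ "b k"])
    also have "\<dots> = (if b k = b j then 1 else 0)"
      using f_b[of "b k" j] that by simp
    also have "\<dots> = (if j = k then 1 else 0)"
      using inj_on_eq_iff[OF inj that(2,1)] by simp
    finally show ?thesis .
  qed
  then show ?thesis by (intro exI[of _ "\<lambda>j. adjoint (f j) 1"]) simp
qed

lemma sum_shift_support:
  fixes g :: "'a::ab_group_add \<Rightarrow> 'b::comm_ring"
  assumes "finite F" and "finite S" and "\<And>v. v \<notin> S \<Longrightarrow> g v = 0" and "(\<lambda>v. v + t) ` S \<subseteq> F"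
  shows "(\<Sum>u\<in>F. g (u - t) * h u) = (\<Sum>v\<in>S. g v * h (v + t))"
proof -
  have "(\<Sum>u\<in>F. g (u - t) * h u) = (\<Sum>u\<in>(\<lambda>v. v + t) ` S. g (u - t) * h u)"
  proof (intro sum.mono_neutral_right ballI)
    fix u assume "u \<in> F - (\<lambda>v. v + t) ` S"
    then have "u - t \<notin> S" by (metis DiffD2 diff_add_cancel image_eqI)
    then show "g (u - t) * h u = 0" using assms(3) by simp
  qed (use assms in auto)
  also have "\<dots> = (\<Sum>v\<in>S. g v * h (v + t))"
    by (subst sum.reindex) (auto simp: inj_on_def)
  finally show ?thesis .
qed

lemma prod_update_factor:
  assumes "finite S" "j \<in> S" "\<And>k. k \<in> S \<Longrightarrow> k \<noteq> j \<Longrightarrow> g k = f k" "g j = c * f j"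
  shows "prod g S = c * prod f S"
proof -
  have "prod g S = g j * prod g (S - {j})"
    using assms(1,2) by (rule prod.remove)
  also have "prod g (S - {j}) = prod f (S - {j})"
    using assms(3) by (intro prod.cong) auto
  finally show ?thesis
    using assms(1,2,4) by (simp add: prod.remove mult.assoc)
qed

definition of_real_K :: "real \<Rightarrow> K" where
  "of_real_K r = to_fract [:complex_of_real r:]"

lemma of_real_K_0 [simp]: "of_real_K 0 = 0"
  by (simp add: of_real_K_def)

lemma of_real_K_1 [simp]: "of_real_K 1 = 1"
  by (simp add: of_real_K_def flip: one_pCons)

lemma of_real_K_add: "of_real_K (x + y) = of_real_K x + of_real_K y"
  by (simp add: of_real_K_def to_fract_def)

lemma of_real_K_mult: "of_real_K (x * y) = of_real_K x * of_real_K y"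
  by (simp add: of_real_K_def to_fract_def mult.commute)

lemma of_real_K_uminus: "of_real_K (- x) = - of_real_K x"
  by (simp add: of_real_K_def to_fract_def)

lemma of_real_K_sum: "of_real_K (\<Sum>i\<in>S. f i) = (\<Sum>i\<in>S. of_real_K (f i))"
  by (induction S rule: infinite_finite_induct) (simp_all add: of_real_K_add)

lemma to_fract_of_int: "to_fract (of_int n) = of_int n"
  by (induction n rule: int_induct[of _ 0]) simp_all

lemma to_fract_const_of_int: "to_fract [:of_int n:] = (of_int n :: 'a::idom poly fract)"
  by (simp add: to_fract_of_int flip: of_int_poly)

lemma of_real_K_of_int: "of_real_K (of_int n) = of_int n"
  by (simp add: of_real_K_def to_fract_of_int flip: of_int_poly)

lemma of_real_K_of_nat: "of_real_K (of_nat n) = of_nat n"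
  using of_real_K_of_int[of "int n"] by simp

lemma lam_eq_to_fract: "lam = to_fract [:0, 1:]"
  unfolding lam_def to_fract_def ..

lemma to_fract_power: "to_fract (p ^ k) = to_fract p ^ k"
  by (induction k) simp_all

lemma lam_power_neq_1: "0 < n \<Longrightarrow> lam ^ n \<noteq> 1"
proof
  assume "0 < n" "lam ^ n = 1"
  then have "to_fract ([:0, 1:] ^ n :: complex poly) = to_fract 1"
    by (simp only: lam_eq_to_fract to_fract_power to_fract_1)
  then have "(monom 1 n :: complex poly) = 1" by (simp only: to_fract_eq_iff monom_altdef smult_1_left)
  then show False using \<open>0 < n\<close> by (simp add: monom_eq_1_iff)
qed

lemma fract_common_denominator:
  fixes S :: "'a::idom fract set"
  assumes "finite S"
  shows "\<exists>Q. Q \<noteq> 0 \<and> (\<forall>x\<in>S. \<exists>p. to_fract Q * x = to_fract p)"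
  using assms
proof (induction S rule: finite_induct)
  case empty
  show ?case by (intro exI[of _ 1]) simp
next
  case (insert x S)
  then obtain Q where Q: "Q \<noteq> 0" "\<forall>y\<in>S. \<exists>p. to_fract Q * y = to_fract p" by blast
  obtain p q where x: "x = Fract p q" "q \<noteq> 0" by (rule Fract_cases[of x])
  have "to_fract (Q * q) * x = to_fract (Q * p)"
    using x by (simp add: Fract_conv_to_fract)
  moreover have "to_fract (Q * q) * y = to_fract q * (to_fract Q * y)" for y
    by simp
  ultimately have "\<forall>y\<in>insert x S. \<exists>p. to_fract (Q * q) * y = to_fract p"
    using Q(2) by (metis insert_iff to_fract_mult)
  then show ?case using Q(1) x(2) by (intro exI[of _ "Q * q"]) simp
qed

lemma fract_clear_denominators:
  fixes S :: "'a::idom fract set"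
  assumes "finite S"
  obtains Q num where "Q \<noteq> 0" "\<And>x. x \<in> S \<Longrightarrow> to_fract (num x) = to_fract Q * x"
proof -
  obtain Q where Q: "Q \<noteq> 0" "\<forall>x\<in>S. \<exists>p. to_fract Q * x = to_fract p"
    using fract_common_denominator[OF assms] by blast
  have "to_fract (SOME p. to_fract Q * x = to_fract p) = to_fract Q * x" if "x \<in> S" for x
  proof -
    have "\<exists>p. to_fract Q * x = to_fract p"
      using Q(2) that by blast
    from someI_ex[OF this] show ?thesis by (rule sym)
  qed
  with Q(1) show ?thesis by (rule that)
qed

lemma fps_pairing_identity_mod_X_imp_zero:
  fixes p :: "'b \<Rightarrow> 'a::comm_ring_1 fps" and \<Phi> :: "'b \<Rightarrow> 'b \<Rightarrow> 'a fps"
  assumes B: "finite B"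
    and diag: "\<And>e b. e \<in> B \<Longrightarrow> b \<in> B \<Longrightarrow> fps_nth (\<Phi> e b) 0 = (if b = e then 1 else 0)"
    and pairing: "\<And>e. e \<in> B \<Longrightarrow> (\<Sum>b\<in>B. p b * \<Phi> e b) = 0"
  shows "\<forall>b\<in>B. p b = 0"
proof (rule ccontr)
  define P where "P n \<longleftrightarrow> (\<exists>b\<in>B. fps_nth (p b) n \<noteq> 0)" for n
  define d where "d = Least P"
  assume "\<not> (\<forall>b\<in>B. p b = 0)"
  then obtain n0 where "P n0" unfolding P_def by (auto simp: fps_eq_iff)
  then have "P d" unfolding d_def by (rule LeastI)
  then obtain e where e: "e \<in> B" "fps_nth (p e) d \<noteq> 0" unfolding P_def by blast
  have low: "fps_nth (p b) n = 0" if "b \<in> B" "n < d" for b n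
    using not_less_Least[of n P] that unfolding d_def P_def by blast
  have "fps_nth (p b * \<Phi> e b) d = (if b = e then fps_nth (p b) d else 0)" if b: "b \<in> B" for b
  proof -
    have "fps_nth (p b * \<Phi> e b) d = (\<Sum>i\<in>insert d {..<d}. fps_nth (p b) i * fps_nth (\<Phi> e b) (d - i))"
      unfolding fps_mult_nth by (rule sum.cong) auto
    also have "\<dots> = fps_nth (p b) d * fps_nth (\<Phi> e b) 0"
      using low[OF b] by (simp add: sum.neutral)
    finally show ?thesis using diag[OF e(1) b] by simp
  qed
  then have "fps_nth (\<Sum>b\<in>B. p b * \<Phi> e b) d = fps_nth (p e) d"
    using B e(1) by (simp add: fps_sum_nth sum.delta' cong: sum.cong)
  then show False using pairing[OF e(1)] e(2) by simp
qed

lemma funpow_returns_in_finite: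
  assumes N: "finite N" and u: "u \<in> N" and f: "\<And>x. x \<in> N \<Longrightarrow> f x \<in> N"
  obtains p r where "(f ^^ (p + Suc r)) u = (f ^^ p) u"
proof -
  define s where "s t = (f ^^ t) u" for t
  have "s t \<in> N" for t
    unfolding s_def by (induction t) (simp_all add: u f)
  then have "finite (range s)"
    using N by (meson finite_subset image_subsetI)
  then have "\<not> inj s"
    using finite_imageD[of s UNIV] by auto
  then obtain p q where pq: "p \<noteq> q" "s p = s q"
    unfolding inj_def by blast
  show ?thesis
  proof (cases "p < q")
    case True
    then show ?thesis using that[of p "q - Suc p"] pq by (simp add: s_def)
  next
    case False
    then show ?thesis using that[of q "p - Suc q"] pq by (simp add: s_def)
  qed
qed

lemma lam_power_telescope:
  fixes y :: "nat \<Rightarrow> 'a \<Rightarrow> K" and G :: "('a \<Rightarrow> K) set"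
  assumes add: "\<And>g h. g \<in> G \<Longrightarrow> h \<in> G \<Longrightarrow> (\<lambda>v. g v + h v) \<in> G"
    and scale: "\<And>c g. g \<in> G \<Longrightarrow> (\<lambda>v. c * g v) \<in> G"
    and step: "\<And>t. (\<lambda>v. y t v - lam * y (Suc t) v) \<in> G"
  shows "(\<lambda>v. y p v - lam ^ Suc r * y (p + Suc r) v) \<in> G"
proof (induction r)
  case 0
  show ?case using step[of p] by simp
next
  case (Suc r)
  have "(\<lambda>v. (y p v - lam ^ Suc r * y (p + Suc r) v)
      + lam ^ Suc r * (y (p + Suc r) v - lam * y (Suc (p + Suc r)) v)) \<in> G"
    using add[OF Suc.IH scale[OF step]] .
  moreover have "(\<lambda>v. (y p v - lam ^ Suc r * y (p + Suc r) v)
      + lam ^ Suc r * (y (p + Suc r) v - lam * y (Suc (p + Suc r)) v))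
    = (\<lambda>v. y p v - lam ^ Suc (Suc r) * y (p + Suc (Suc r)) v)"
    by (simp add: fun_eq_iff algebra_simps)
  ultimately show ?case by simp
qed

lemma lam_cycle_closed:
  fixes x :: "'b \<Rightarrow> 'a \<Rightarrow> K" and G :: "('a \<Rightarrow> K) set"
  assumes add: "\<And>g h. g \<in> G \<Longrightarrow> h \<in> G \<Longrightarrow> (\<lambda>v. g v + h v) \<in> G"
    and scale: "\<And>c g. g \<in> G \<Longrightarrow> (\<lambda>v. c * g v) \<in> G"
    and N: "finite N"
    and step: "\<And>u. u \<in> N \<Longrightarrow> x u \<in> G \<or> (f u \<in> N \<and> (\<lambda>v. x u v - lam * x (f u) v) \<in> G)"
    and u: "u \<in> N"
  shows "x u \<in> G"
proof (rule ccontr)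
  assume "x u \<notin> G"
  define N' where "N' = {u \<in> N. x u \<notin> G}"
  have f_N': "f u \<in> N' \<and> (\<lambda>v. x u v - lam * x (f u) v) \<in> G" if "u \<in> N'" for u
  proof -
    have *: "f u \<in> N" "(\<lambda>v. x u v - lam * x (f u) v) \<in> G"
      using step[of u] that unfolding N'_def by auto
    have "x (f u) \<notin> G"
    proof
      assume "x (f u) \<in> G"
      then have "(\<lambda>v. (x u v - lam * x (f u) v) + lam * x (f u) v) \<in> G"
        using add[OF *(2) scale] by blast
      then show False using that unfolding N'_def by simp
    qed
    then show ?thesis using * unfolding N'_def by blast
  qed
  have "u \<in> N'" "finite N'"
    using u \<open>x u \<notin> G\<close> N by (auto simp: N'_def)
  then obtain p r where r: "(f ^^ (p + Suc r)) u = (f ^^ p) u"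
    using f_N' funpow_returns_in_finite by metis
  have orbit: "(f ^^ t) u \<in> N'" for t
    by (induction t) (simp_all add: \<open>u \<in> N'\<close> f_N')
  have orbit_step: "(\<lambda>v. x ((f ^^ t) u) v - lam * x ((f ^^ Suc t) u) v) \<in> G" for t
    using conjunct2[OF f_N'[OF orbit[of t]]] by simp
  have "(\<lambda>v. x ((f ^^ p) u) v - lam ^ Suc r * x ((f ^^ (p + Suc r)) u) v) \<in> G"
    using lam_power_telescope[where y = "\<lambda>t. x ((f ^^ t) u)", OF add scale orbit_step] .
  then have cycle: "(\<lambda>v. x ((f ^^ p) u) v - lam ^ Suc r * x ((f ^^ p) u) v) \<in> G"
    by (simp only: r)
  have "1 - lam ^ Suc r \<noteq> 0"
    using lam_power_neq_1[of "Suc r"] by simp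
  then have unit: "x ((f ^^ p) u)
      = (\<lambda>v. inverse (1 - lam ^ Suc r) * (x ((f ^^ p) u) v - lam ^ Suc r * x ((f ^^ p) u) v))"
    by (simp add: fun_eq_iff field_simps)
  have "x ((f ^^ p) u) \<in> G"
    by (subst unit) (rule scale[OF cycle])
  then show False
    using orbit[of p] unfolding N'_def by blast
qed

section \<open>Coordinates with respect to the basis \<open>A\<close>\<close>

locale circuit_coset =
  fixes a :: "nat \<Rightarrow> int ^ 'n" and l :: "nat \<Rightarrow> nat" and m :: nat
    and w :: "int ^ 'n" and Ck :: "(int ^ 'n) set" and \<phi> :: "nat \<Rightarrow> real ^ 'n"
  assumes l_pos: "\<forall>j\<in>{0..m}. 0 < l j"
    and rel: "(\<chi> i. int (l 0) * a 0 $ i) = (\<chi> i. \<Sum>j=1..m. int (l j) * a j $ i)"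
    and l0: "l 0 = (\<Sum>j=1..m. l j)"
    and w_VZ: "w \<in> VZ a m"
    and Ck_eq: "Ck = (\<lambda>g. w + g) ` ZAplus a m"
    and dual: "\<And>j k. j \<in> {1..m} \<Longrightarrow> k \<in> {1..m} \<Longrightarrow> \<phi> j \<bullet> rv (a k) = (if j = k then 1 else 0)"
begin

definition coord :: "nat \<Rightarrow> int ^ 'n \<Rightarrow> real" where
  "coord j v = \<phi> j \<bullet> rv v"

abbreviation Vspan :: "(real ^ 'n) set" where
  "Vspan \<equiv> span (rv ` a ` {1..m})"

lemma coord_add: "coord j (u + v) = coord j u + coord j v"
  by (simp add: coord_def rv_add inner_add_right)

lemma coord_diff: "coord j (u - v) = coord j u - coord j v"
  by (simp add: coord_def rv_diff inner_diff_right)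

lemma coord_a: "j \<in> {1..m} \<Longrightarrow> k \<in> {1..m} \<Longrightarrow> coord j (a k) = (if j = k then 1 else 0)"
  by (simp add: coord_def dual)

lemma inj_on_rv_a: "inj_on (\<lambda>k. rv (a k)) {1..m}"
  using dual by (intro inj_onI) (metis one_neq_zero)

lemma dual_inner_sum:
  assumes "k \<in> {1..m}"
  shows "\<phi> k \<bullet> (\<Sum>j=1..m. c j *\<^sub>R rv (a j)) = c k"
proof -
  have "\<phi> k \<bullet> (\<Sum>j=1..m. c j *\<^sub>R rv (a j)) = (\<Sum>j=1..m. c j * (\<phi> k \<bullet> rv (a j)))"
    by (simp add: inner_sum_right)
  also have "\<dots> = (\<Sum>j=1..m. if k = j then c j else 0)"
    using dual[OF assms] by (intro sum.cong) auto
  also have "\<dots> = c k"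
    using assms by (simp add: sum.delta)
  finally show ?thesis .
qed

lemma span_expansion:
  assumes "x \<in> Vspan"
  shows "x = (\<Sum>j=1..m. (\<phi> j \<bullet> x) *\<^sub>R rv (a j))"
proof -
  obtain u where "x = (\<Sum>v\<in>rv ` a ` {1..m}. u v *\<^sub>R v)"
    using assms unfolding span_finite[OF finite_imageI[OF finite_imageI[OF finite_atLeastAtMost]]]
    by blast
  also have "\<dots> = (\<Sum>j=1..m. u (rv (a j)) *\<^sub>R rv (a j))"
    using sum.reindex[OF inj_on_rv_a] by (simp add: image_image o_def)
  finally have x: "x = (\<Sum>j=1..m. u (rv (a j)) *\<^sub>R rv (a j))" .
  have "\<phi> k \<bullet> x = u (rv (a k))" if "k \<in> {1..m}" for k
    unfolding x by (rule dual_inner_sum[OF that])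
  then show ?thesis
    by (subst x) (intro sum.cong refl, simp)
qed

lemma sum_in_Vspan: "(\<Sum>j=1..m. c j *\<^sub>R rv (a j)) \<in> Vspan"
  by (intro span_sum span_scale span_base) auto

lemma VZ_iff: "v \<in> VZ a m \<longleftrightarrow> rv v \<in> Vspan"
  by (simp add: VZ_def)

lemma coord_expansion: "v \<in> VZ a m \<Longrightarrow> rv v = (\<Sum>j=1..m. coord j v *\<^sub>R rv (a j))"
  unfolding coord_def VZ_iff by (rule span_expansion)

lemma coord_expansion_component:
  "v \<in> VZ a m \<Longrightarrow> real_of_int (v $ i) = (\<Sum>j=1..m. coord j v * real_of_int (a j $ i))"
proof -
  assume v: "v \<in> VZ a m"
  have "real_of_int (v $ i) = rv v $ i" by (simp add: rv_def)
  also have "\<dots> = (\<Sum>j=1..m. coord j v * real_of_int (a j $ i))"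
    by (subst coord_expansion[OF v]) (simp add: sum_component rv_def)
  finally show ?thesis .
qed

lemma coord_unique:
  assumes "rv v = (\<Sum>j=1..m. c j *\<^sub>R rv (a j))" "k \<in> {1..m}"
  shows "coord k v = c k"
proof -
  have "coord k v = \<phi> k \<bullet> (\<Sum>j=1..m. c j *\<^sub>R rv (a j))"
    using assms(1) unfolding coord_def by simp
  also have "\<dots> = c k"
    by (rule dual_inner_sum[OF assms(2)])
  finally show ?thesis .
qed

lemma coord_eq_imp_eq:
  assumes "u \<in> VZ a m" "v \<in> VZ a m" "\<forall>j\<in>{1..m}. coord j u = coord j v"
  shows "u = v"
proof (rule rv_inj)
  show "rv u = rv v"
    unfolding coord_expansion[OF assms(1)] coord_expansion[OF assms(2)]
    using assms(3) by (intro sum.cong) auto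
qed

lemma expansion_iff:
  assumes "v \<in> VZ a m"
  shows "(\<exists>c. (\<forall>j\<in>{1..m}. P (c j)) \<and> rv v = (\<Sum>j=1..m. c j *\<^sub>R rv (a j)))
    \<longleftrightarrow> (\<forall>j\<in>{1..m}. P (coord j v))"
proof
  assume "\<exists>c. (\<forall>j\<in>{1..m}. P (c j)) \<and> rv v = (\<Sum>j=1..m. c j *\<^sub>R rv (a j))"
  then obtain c where c: "\<forall>j\<in>{1..m}. P (c j)" "rv v = (\<Sum>j=1..m. c j *\<^sub>R rv (a j))"
    by blast
  then show "\<forall>j\<in>{1..m}. P (coord j v)"
    using coord_unique[OF c(2)] by simp
next
  assume "\<forall>j\<in>{1..m}. P (coord j v)"
  then show "\<exists>c. (\<forall>j\<in>{1..m}. P (c j)) \<and> rv v = (\<Sum>j=1..m. c j *\<^sub>R rv (a j))"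
    using coord_expansion[OF assms] by (intro exI[of _ "\<lambda>j. coord j v"] conjI)
qed

lemma VZ_add: "u \<in> VZ a m \<Longrightarrow> v \<in> VZ a m \<Longrightarrow> u + v \<in> VZ a m"
  by (simp add: VZ_iff rv_add span_add)

lemma l0_pos: "0 < l 0"
  using l_pos by simp

lemma rv_a0_expansion: "rv (a 0) = (\<Sum>j=1..m. (real (l j) / real (l 0)) *\<^sub>R rv (a j))"
proof -
  have "real (l 0) * real_of_int (a 0 $ i) = (\<Sum>j=1..m. real (l j) * real_of_int (a j $ i))" for i
    using arg_cong[OF rel, of "\<lambda>v. real_of_int (v $ i)"] by simp
  then have "real (l 0) *\<^sub>R rv (a 0) = (\<Sum>j=1..m. real (l j) *\<^sub>R rv (a j))"
    by (simp add: vec_eq_iff rv_def sum_component)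
  moreover have "rv (a 0) = (1 / real (l 0)) *\<^sub>R (real (l 0) *\<^sub>R rv (a 0))"
    using l0_pos by simp
  ultimately show ?thesis
    by (simp add: scaleR_sum_right)
qed

lemma a_VZ:
  assumes "j \<le> m"
  shows "a j \<in> VZ a m"
proof (cases "j = 0")
  case True
  show ?thesis
    unfolding VZ_iff True by (subst rv_a0_expansion) (rule sum_in_Vspan)
next
  case False
  then show ?thesis
    using assms unfolding VZ_iff by (intro span_base) auto
qed

lemma coord_a0: "k \<in> {1..m} \<Longrightarrow> coord k (a 0) = real (l k) / real (l 0)"
  by (rule coord_unique[OF rv_a0_expansion])

lemma coneA_iff:
  "v \<in> VZ a m \<Longrightarrow> rv v \<in> coneA a m \<longleftrightarrow> (\<forall>j\<in>{1..m}. 0 \<le> coord j v)"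
  unfolding coneA_def mem_Collect_eq by (rule expansion_iff[where P = "\<lambda>c. 0 \<le> c"])

lemma PA_iff:
  "v \<in> VZ a m \<Longrightarrow> rv v \<in> PA a m \<longleftrightarrow> (\<forall>j\<in>{1..m}. 0 \<le> coord j v \<and> coord j v < 1)"
  unfolding PA_def mem_Collect_eq by (rule expansion_iff[where P = "\<lambda>c. 0 \<le> c \<and> c < 1"])

lemma coneA_subset_Vspan: "coneA a m \<subseteq> Vspan"
  unfolding coneA_def using sum_in_Vspan by blast

lemma coneA_iff_dual:
  assumes "x \<in> Vspan"
  shows "x \<in> coneA a m \<longleftrightarrow> (\<forall>j\<in>{1..m}. 0 \<le> \<phi> j \<bullet> x)"
proof
  assume "x \<in> coneA a m"
  then obtain c where c: "\<forall>j\<in>{1..m}. 0 \<le> c j" and x: "x = (\<Sum>j=1..m. c j *\<^sub>R rv (a j))"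
    unfolding coneA_def by blast
  show "\<forall>j\<in>{1..m}. 0 \<le> \<phi> j \<bullet> x"
  proof
    fix j assume "j \<in> {1..m}"
    then show "0 \<le> \<phi> j \<bullet> x"
      using c dual_inner_sum[of j c] x by simp
  qed
next
  assume "\<forall>j\<in>{1..m}. 0 \<le> \<phi> j \<bullet> x"
  then show "x \<in> coneA a m"
    unfolding coneA_def using span_expansion[OF assms]
    by (intro CollectI exI[of _ "\<lambda>j. \<phi> j \<bullet> x"] conjI)
qed

lemma rel_interior_coneA_imp_pos:
  assumes "x \<in> rel_interior (coneA a m)" "j \<in> {1..m}"
  shows "0 < \<phi> j \<bullet> x"
proof (rule ccontr)
  assume "\<not> 0 < \<phi> j \<bullet> x"
  obtain e where e: "e > 0" "ball x e \<inter> affine hull (coneA a m) \<subseteq> coneA a m"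
    and x: "x \<in> coneA a m"
    using assms(1) unfolding mem_rel_interior_ball by blast
  define t where "t = e / (2 * (norm (rv (a j)) + 1))"
  have "0 < norm (rv (a j)) + 1"
    using norm_ge_zero[of "rv (a j)"] by linarith
  then have np: "0 < 2 * (norm (rv (a j)) + 1)"
    by simp
  have t: "t > 0" "t * norm (rv (a j)) < e"
  proof -
    show "t > 0" unfolding t_def using e(1) np by simp
    have "t * norm (rv (a j)) \<le> t * (norm (rv (a j)) + 1)" using \<open>t > 0\<close> by simp
    also have "\<dots> = e / 2" unfolding t_def using np by (simp add: field_simps)
    finally show "t * norm (rv (a j)) < e" using e(1) by simp
  qed
  \<comment> \<open>Moving from x away from its translate x + a_j stays in the affine hull but leaves the cone.\<close>
  define y where "y = x - t *\<^sub>R rv (a j)"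
  have "y \<in> ball x e"
    using t by (simp add: y_def dist_norm)
  have xa: "x + rv (a j) \<in> coneA a m"
  proof -
    have xV: "x + rv (a j) \<in> Vspan"
      using x assms(2) coneA_subset_Vspan by (intro span_add[OF _ span_base]) auto
    have "\<forall>k\<in>{1..m}. 0 \<le> \<phi> k \<bullet> x"
      using x coneA_subset_Vspan coneA_iff_dual by blast
    then have "\<forall>k\<in>{1..m}. 0 \<le> \<phi> k \<bullet> (x + rv (a j))"
      using dual assms(2) by (simp add: inner_add_right)
    then show ?thesis using coneA_iff_dual[OF xV] by blast
  qed
  have "y = (1 + t) *\<^sub>R x + (- t) *\<^sub>R (x + rv (a j))"
    by (simp add: y_def algebra_simps)
  also have "\<dots> \<in> affine hull (coneA a m)"
    using x xa by (intro mem_affine[OF affine_affine_hull]) (auto intro: hull_inc)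
  finally have "y \<in> coneA a m"
    using \<open>y \<in> ball x e\<close> e(2) by blast
  then have "0 \<le> \<phi> j \<bullet> y"
    using assms(2) coneA_subset_Vspan coneA_iff_dual by blast
  moreover have "\<phi> j \<bullet> y = \<phi> j \<bullet> x - t"
    using assms(2) by (simp add: y_def inner_diff_right dual)
  ultimately show False
    using \<open>\<not> 0 < \<phi> j \<bullet> x\<close> t(1) by simp
qed

lemma pos_imp_rel_interior_coneA:
  assumes "x \<in> Vspan" "\<forall>j\<in>{1..m}. 0 < \<phi> j \<bullet> x"
  shows "x \<in> rel_interior (coneA a m)"
proof -
  define T where "T = (\<Inter>j\<in>{1..m}. {y. 0 < \<phi> j \<bullet> y})"
  have "open T"
    unfolding T_def by (intro open_INT) (auto intro: open_halfspace_gt)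
  moreover have "x \<in> T"
    using assms(2) by (simp add: T_def)
  moreover have "T \<inter> Vspan \<subseteq> coneA a m"
    by (auto simp: T_def coneA_iff_dual less_imp_le)
  moreover have "affine hull (coneA a m) \<subseteq> Vspan"
    by (rule hull_minimal[OF coneA_subset_Vspan]) (simp add: subspace_imp_affine)
  ultimately show ?thesis
    using assms(1) unfolding mem_rel_interior by blast
qed

lemma rel_interior_coneA_iff:
  "v \<in> VZ a m \<Longrightarrow> rv v \<in> rel_interior (coneA a m) \<longleftrightarrow> (\<forall>j\<in>{1..m}. 0 < coord j v)"
  using rel_interior_coneA_imp_pos pos_imp_rel_interior_coneA by (auto simp: VZ_iff coord_def)

section \<open>The coset and the box\<close>

lemma ZAplus_intro: "(\<chi> i. \<Sum>j=0..m. z j * a j $ i) \<in> ZAplus a m"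
  unfolding ZAplus_def by blast

lemma ZAplus_add:
  assumes "x \<in> ZAplus a m" "y \<in> ZAplus a m"
  shows "x + y \<in> ZAplus a m"
proof -
  obtain z1 z2 where "x = (\<chi> i. \<Sum>j=0..m. z1 j * a j $ i)" "y = (\<chi> i. \<Sum>j=0..m. z2 j * a j $ i)"
    using assms unfolding ZAplus_def by blast
  then have "x + y = (\<chi> i. \<Sum>j=0..m. (z1 j + z2 j) * a j $ i)"
    by (simp add: vec_eq_iff distrib_right sum.distrib)
  then show ?thesis using ZAplus_intro by simp
qed

lemma ZAplus_uminus:
  assumes "x \<in> ZAplus a m"
  shows "- x \<in> ZAplus a m"
proof -
  obtain z where "x = (\<chi> i. \<Sum>j=0..m. z j * a j $ i)"
    using assms unfolding ZAplus_def by blast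
  then have "- x = (\<chi> i. \<Sum>j=0..m. (- z j) * a j $ i)"
    by (simp add: vec_eq_iff sum_negf)
  then show ?thesis using ZAplus_intro[of "\<lambda>j. - z j"] by simp
qed

lemma ZAplus_a: "j \<le> m \<Longrightarrow> a j \<in> ZAplus a m"
  using ZAplus_intro[of "\<lambda>k. if k = j then 1 else 0"]
  by (simp add: if_distrib[of "\<lambda>c. c * _"] sum.delta cong: if_cong)

lemma ZAplus_VZ:
  assumes "x \<in> ZAplus a m"
  shows "x \<in> VZ a m"
proof -
  obtain z where z: "x = (\<chi> i. \<Sum>j=0..m. z j * a j $ i)"
    using assms unfolding ZAplus_def by blast
  have "rv x = (\<Sum>j=0..m. real_of_int (z j) *\<^sub>R rv (a j))"
    by (simp add: z vec_eq_iff rv_def sum_component)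
  also have "\<dots> \<in> Vspan"
    using a_VZ by (intro span_sum span_scale) (simp add: VZ_iff)
  finally show ?thesis by (simp add: VZ_iff)
qed

lemma Ck_iff: "u \<in> Ck \<longleftrightarrow> u - w \<in> ZAplus a m"
proof
  assume "u \<in> Ck"
  then obtain g where "g \<in> ZAplus a m" "u = w + g"
    unfolding Ck_eq by blast
  then show "u - w \<in> ZAplus a m" by simp
next
  assume "u - w \<in> ZAplus a m"
  moreover have "u = w + (u - w)" by simp
  ultimately show "u \<in> Ck"
    unfolding Ck_eq by blast
qed

lemma Ck_add_a:
  assumes "u \<in> Ck" "j \<le> m"
  shows "u + a j \<in> Ck"
proof -
  have "u + a j - w = (u - w) + a j"
    by (simp add: algebra_simps)
  then show ?thesis
    using assms ZAplus_add[OF _ ZAplus_a] unfolding Ck_iff by metis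
qed

lemma Ck_diff_a:
  assumes "u \<in> Ck" "j \<le> m"
  shows "u - a j \<in> Ck"
proof -
  have "u - a j - w = (u - w) + - a j"
    by (simp add: algebra_simps)
  then show ?thesis
    using assms ZAplus_add[OF _ ZAplus_uminus[OF ZAplus_a]] unfolding Ck_iff by metis
qed

lemma Ck_VZ: "u \<in> Ck \<Longrightarrow> u \<in> VZ a m"
  unfolding Ck_iff using ZAplus_VZ[of "u - w"] VZ_add[OF w_VZ, of "u - w"] by simp

abbreviation Mk :: "(int ^ 'n) set" where
  "Mk \<equiv> Mset a m \<inter> Ck"

definition interior_pt :: "int ^ 'n \<Rightarrow> bool" where
  "interior_pt u \<longleftrightarrow> (\<forall>j\<in>{1..m}. 0 < coord j u)"

definition weight :: "int ^ 'n \<Rightarrow> real" where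
  "weight u = (\<Sum>j=1..m. coord j u)"

lemma Mk_iff: "u \<in> Mk \<longleftrightarrow> u \<in> Ck \<and> (\<forall>j\<in>{1..m}. 0 \<le> coord j u)"
  unfolding Mset_def using coneA_iff Ck_VZ by blast

lemma weight_add: "weight (u + v) = weight u + weight v"
  by (simp add: weight_def coord_add sum.distrib)

lemma weight_diff: "weight (u - v) = weight u - weight v"
  by (simp add: weight_def coord_diff sum_subtractf)

lemma weight_a:
  assumes "j \<in> {1..m}"
  shows "weight (a j) = 1"
proof -
  have "weight (a j) = (\<Sum>k=1..m. if k = j then 1 else 0)"
    unfolding weight_def using coord_a[OF _ assms] by (intro sum.cong) auto
  then show ?thesis using assms by (simp add: sum.delta)
qed

lemma weight_a0: "weight (a 0) = 1"
proof -
  have "weight (a 0) = (\<Sum>k=1..m. real (l k)) / real (l 0)"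
    unfolding weight_def sum_divide_distrib by (intro sum.cong) (simp_all add: coord_a0)
  also have "\<dots> = real (\<Sum>k=1..m. l k) / real (l 0)"
    by (simp only: of_nat_sum)
  also have "\<dots> = 1"
    unfolding l0[symmetric] using l0_pos by simp
  finally show ?thesis .
qed

lemma finite_bounded_weight: "finite {u \<in> Mk. weight u \<le> W}"
proof -
  define A where "A = (\<Sum>j=1..m. \<Sum>i\<in>UNIV. \<bar>real_of_int (a j $ i)\<bar>)"
  define R where "R = \<lceil>max W 0 * A\<rceil>"
  have A: "0 \<le> A"
    unfolding A_def by (intro sum_nonneg) auto
  have aA: "\<bar>real_of_int (a j $ i)\<bar> \<le> A" if "j \<in> {1..m}" for j i
  proof -
    have "\<bar>real_of_int (a j $ i)\<bar> \<le> (\<Sum>i\<in>UNIV. \<bar>real_of_int (a j $ i)\<bar>)"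
      by (rule member_le_sum) auto
    also have "\<dots> \<le> A"
      unfolding A_def by (rule member_le_sum) (use that in \<open>auto intro: sum_nonneg\<close>)
    finally show ?thesis .
  qed
  have "\<bar>u $ i\<bar> \<le> R" if u: "u \<in> Mk" "weight u \<le> W" for u i
  proof -
    have c: "\<forall>j\<in>{1..m}. 0 \<le> coord j u" and "u \<in> VZ a m"
      using u(1) Mk_iff Ck_VZ by auto
    have "\<bar>real_of_int (u $ i)\<bar> \<le> (\<Sum>j=1..m. \<bar>coord j u * real_of_int (a j $ i)\<bar>)"
      unfolding coord_expansion_component[OF \<open>u \<in> VZ a m\<close>] by (rule sum_abs)
    also have "\<dots> \<le> (\<Sum>j=1..m. coord j u * A)"
      using c aA by (intro sum_mono) (simp add: abs_mult mult_left_mono)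
    also have "\<dots> = weight u * A"
      by (simp add: weight_def sum_distrib_right)
    also have "\<dots> \<le> max W 0 * A"
      using u(2) A by (intro mult_right_mono) auto
    also have "\<dots> \<le> real_of_int R"
      unfolding R_def by (rule le_of_int_ceiling)
    finally show ?thesis by linarith
  qed
  then have "{u \<in> Mk. weight u \<le> W} \<subseteq> {v. \<forall>i. \<bar>v $ i\<bar> \<le> R}"
    by blast
  then show ?thesis
    using finite_bounded_int_vectors finite_subset by blast
qed

definition Bpos :: "(int ^ 'n) set" where
  "Bpos = {b \<in> Bset a m \<inter> Ck. \<forall>j\<in>{1..m}. 0 < coord j b}"

lemma Bpos_iff: "b \<in> Bpos \<longleftrightarrow> b \<in> Ck \<and> (\<forall>j\<in>{1..m}. 0 < coord j b \<and> coord j b < 1)"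
  unfolding Bpos_def Bset_def using PA_iff Ck_VZ by fastforce

lemma Bpos_interior: "b \<in> Bpos \<Longrightarrow> b \<in> Mk \<and> interior_pt b"
  unfolding Bpos_iff Mk_iff interior_pt_def by auto

lemma finite_Bpos: "finite Bpos"
proof -
  have "weight b \<le> real m" if "b \<in> Bpos" for b
    using sum_mono[of "{1..m}" "\<lambda>j. coord j b" "\<lambda>_. 1"] that
    by (simp add: weight_def Bpos_iff less_imp_le)
  then have "Bpos \<subseteq> {u \<in> Mk. weight u \<le> real m}"
    using Bpos_interior by blast
  then show ?thesis
    using finite_bounded_weight finite_subset by blast
qed

lemma Rk_eq_card_Bpos: "Rk a m Ck = card Bpos"
proof -
  have "(\<exists>c. (\<forall>j\<in>{1..m}. 0 < c j) \<and> rv v = (\<Sum>j=1..m. c j *\<^sub>R rv (a j)))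
      \<longleftrightarrow> (\<forall>j\<in>{1..m}. 0 < coord j v)" if "v \<in> Bset a m \<inter> Ck" for v
    using Ck_VZ that by (intro expansion_iff[where P = "\<lambda>c. 0 < c"]) blast
  then have "{v \<in> Bset a m \<inter> Ck. \<exists>c. (\<forall>j\<in>{1..m}. 0 < c j) \<and> rv v = (\<Sum>j=1..m. c j *\<^sub>R rv (a j))}
      = Bpos"
    unfolding Bpos_def by (intro Collect_cong conj_cong refl)
  then show ?thesis
    unfolding Rk_def by simp
qed

lemma Bpos_eq:
  assumes "b \<in> Bpos" "e \<in> Bpos" "\<forall>j\<in>{1..m}. coord j b = coord j e"
  shows "b = e"
  using assms coord_eq_imp_eq Bpos_iff Ck_VZ by blast

end

section \<open>Interior monomials are spanned by the box monomials\<close>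

lemma Sk_add:
  assumes "f \<in> Sk S" "g \<in> Sk S"
  shows "(\<lambda>v. f v + g v) \<in> Sk S"
proof -
  have "{v. f v + g v \<noteq> 0} \<subseteq> {v. f v \<noteq> 0} \<union> {v. g v \<noteq> 0}"
    by auto
  then show ?thesis
    using assms unfolding Sk_def by (auto intro: finite_subset)
qed

lemma Sk_scale: "f \<in> Sk S \<Longrightarrow> (\<lambda>v. c * f v) \<in> Sk S"
  unfolding Sk_def by (auto intro: finite_subset[of _ "{v. f v \<noteq> 0}"])

lemma Sk_xmon: "u \<in> S \<Longrightarrow> xmon u \<in> Sk S"
proof -
  have "{v. xmon u v \<noteq> 0} = {u}"
    by (auto simp: xmon_def)
  then show "u \<in> S \<Longrightarrow> xmon u \<in> Sk S"
    unfolding Sk_def by simp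
qed

lemma Dop_add: "Dop a l m i (\<lambda>v. f v + g v) v = Dop a l m i f v + Dop a l m i g v"
  unfolding Dop_def by (simp add: algebra_simps sum.distrib)

lemma Dop_scale: "Dop a l m i (\<lambda>v. c * f v) v = c * Dop a l m i f v"
  unfolding Dop_def by (simp add: algebra_simps sum_distrib_left)

lemma DImg_zero: "(\<lambda>v. 0) \<in> DImg a l m S"
proof -
  have "(\<lambda>v. 0) = (\<lambda>v. \<Sum>i\<in>UNIV. Dop a l m i (\<lambda>v. 0) v)"
    by (simp add: Dop_def)
  moreover have "(\<lambda>v. 0) \<in> Sk S"
    by (simp add: Sk_def)
  ultimately show ?thesis
    unfolding DImg_def by (intro CollectI exI[of _ "\<lambda>i v. 0"]) simp
qed

lemma DImg_add:
  assumes "d1 \<in> DImg a l m S" "d2 \<in> DImg a l m S"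
  shows "(\<lambda>v. d1 v + d2 v) \<in> DImg a l m S"
proof -
  obtain G1 G2 where G: "\<forall>i. G1 i \<in> Sk S" "\<forall>i. G2 i \<in> Sk S"
    and d: "d1 = (\<lambda>v. \<Sum>i\<in>UNIV. Dop a l m i (G1 i) v)" "d2 = (\<lambda>v. \<Sum>i\<in>UNIV. Dop a l m i (G2 i) v)"
    using assms unfolding DImg_def by blast
  define G where "G i = (\<lambda>v. G1 i v + G2 i v)" for i
  have "(\<lambda>v. d1 v + d2 v) = (\<lambda>v. \<Sum>i\<in>UNIV. Dop a l m i (G i) v)"
    unfolding d G_def by (simp add: Dop_add sum.distrib)
  moreover have "\<forall>i. G i \<in> Sk S"
    unfolding G_def using G Sk_add by blast
  ultimately show ?thesis
    unfolding DImg_def by blast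
qed

lemma DImg_scale:
  assumes "d \<in> DImg a l m S"
  shows "(\<lambda>v. c * d v) \<in> DImg a l m S"
proof -
  obtain G1 where G1: "\<forall>i. G1 i \<in> Sk S" and d: "d = (\<lambda>v. \<Sum>i\<in>UNIV. Dop a l m i (G1 i) v)"
    using assms unfolding DImg_def by blast
  define G where "G i = (\<lambda>v. c * G1 i v)" for i
  have "(\<lambda>v. c * d v) = (\<lambda>v. \<Sum>i\<in>UNIV. Dop a l m i (G i) v)"
    unfolding d G_def by (simp add: Dop_scale sum_distrib_left)
  moreover have "\<forall>i. G i \<in> Sk S"
    unfolding G_def using G1 Sk_scale by blast
  ultimately show ?thesis
    unfolding DImg_def by blast
qed

context circuit_coset
begin

abbreviation DI :: "(int ^ 'n \<Rightarrow> K) set" where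
  "DI \<equiv> DImg a l m Mk"

lemma sum_dual_of_int: "(\<Sum>i\<in>UNIV. of_real_K (\<phi> j $ i) * of_int (x $ i)) = of_real_K (coord j x)"
  by (simp add: coord_def inner_vec_def rv_def of_real_K_sum of_real_K_mult of_real_K_of_int)

lemma sum_dual_Dop:
  assumes j: "j \<in> {1..m}"
  shows "(\<Sum>i\<in>UNIV. of_real_K (\<phi> j $ i) * Dop a l m i g v)
    = of_real_K (coord j v) * g v + of_nat (l j) * g (v - a j) - of_nat (l j) * lam * g (v - a 0)"
proof -
  have la: "(\<Sum>i\<in>UNIV. of_real_K (\<phi> j $ i) * of_int (int (l k) * a k $ i)) = of_nat (l k) * of_real_K (coord j (a k))"
    for k
    by (simp add: sum_distrib_left algebra_simps flip: sum_dual_of_int)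
  have "(\<Sum>k=1..m. of_nat (l k) * of_real_K (coord j (a k)) * g (v - a k))
      = (\<Sum>k=1..m. if j = k then of_nat (l k) * g (v - a k) else 0)"
    using coord_a[OF j] by (intro sum.cong) auto
  also have "\<dots> = of_nat (l j) * g (v - a j)"
    using j by (simp add: sum.delta)
  finally have la_sum: "(\<Sum>k=1..m. of_nat (l k) * of_real_K (coord j (a k)) * g (v - a k))
      = of_nat (l j) * g (v - a j)" .
  have "of_nat (l 0) * of_real_K (coord j (a 0)) = of_real_K (real (l 0)) * of_real_K (real (l j) / real (l 0))"
    by (simp add: coord_a0[OF j] of_real_K_of_nat)
  also have "\<dots> = of_real_K (real (l 0) * (real (l j) / real (l 0)))"
    by (simp only: of_real_K_mult)
  also have "\<dots> = of_nat (l j)"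
    using l0_pos by (simp add: of_real_K_of_nat)
  finally have la0: "of_nat (l 0) * of_real_K (coord j (a 0)) = (of_nat (l j) :: K)" .
  have "(\<Sum>i\<in>UNIV. of_real_K (\<phi> j $ i) * Dop a l m i g v)
      = (\<Sum>i\<in>UNIV. of_real_K (\<phi> j $ i) * of_int (v $ i)) * g v
        + (\<Sum>k=1..m. (\<Sum>i\<in>UNIV. of_real_K (\<phi> j $ i) * of_int (int (l k) * a k $ i)) * g (v - a k))
        - (\<Sum>i\<in>UNIV. of_real_K (\<phi> j $ i) * of_int (int (l 0) * a 0 $ i)) * lam * g (v - a 0)"
    unfolding Dop_def
    by (simp add: algebra_simps sum.distrib sum_subtractf sum_distrib_left sum_distrib_right
        sum.swap[of _ UNIV])
  also have "\<dots> = of_real_K (coord j v) * g v + of_nat (l j) * g (v - a j) - of_nat (l j) * lam * g (v - a 0)"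
    unfolding la sum_dual_of_int la_sum la0 ..
  finally show ?thesis .
qed

lemma sum_dual_Dop_in_DI:
  assumes j: "j \<in> {1..m}" and g: "g \<in> Sk Mk"
  shows "(\<lambda>v. of_real_K (coord j v) * g v + of_nat (l j) * g (v - a j) - of_nat (l j) * lam * g (v - a 0))
    \<in> DI"
proof -
  define G where "G i = (\<lambda>v. of_real_K (\<phi> j $ i) * g v)" for i
  have "\<forall>i. G i \<in> Sk Mk"
    unfolding G_def using g Sk_scale by blast
  moreover have "(\<lambda>v. of_real_K (coord j v) * g v + of_nat (l j) * g (v - a j) - of_nat (l j) * lam * g (v - a 0))
      = (\<lambda>v. \<Sum>i\<in>UNIV. Dop a l m i (G i) v)"
    unfolding G_def by (simp add: Dop_scale sum_dual_Dop[OF j])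
  ultimately show ?thesis
    unfolding DImg_def by blast
qed

definition box_span :: "(int ^ 'n \<Rightarrow> K) set" where
  "box_span = {h. \<exists>c d. d \<in> DI \<and> h = (\<lambda>v. (\<Sum>b\<in>Bpos. c b * xmon b v) + d v)}"

lemma box_spanI:
  assumes "d \<in> DI" "\<And>v. h v = (\<Sum>b\<in>Bpos. c b * xmon b v) + d v"
  shows "h \<in> box_span"
  unfolding box_span_def using assms by (intro CollectI exI[of _ c] exI[of _ d]) auto

lemma box_span_add:
  assumes "h1 \<in> box_span" "h2 \<in> box_span"
  shows "(\<lambda>v. h1 v + h2 v) \<in> box_span"
proof -
  obtain c1 d1 c2 d2 where "d1 \<in> DI" "h1 = (\<lambda>v. (\<Sum>b\<in>Bpos. c1 b * xmon b v) + d1 v)"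
    and "d2 \<in> DI" "h2 = (\<lambda>v. (\<Sum>b\<in>Bpos. c2 b * xmon b v) + d2 v)"
    using assms unfolding box_span_def by blast
  then show ?thesis
    by (intro box_spanI[where c = "\<lambda>b. c1 b + c2 b", OF DImg_add])
      (simp_all add: algebra_simps sum.distrib)
qed

lemma box_span_scale:
  assumes "h \<in> box_span"
  shows "(\<lambda>v. c * h v) \<in> box_span"
proof -
  obtain c1 d where "d \<in> DI" "h = (\<lambda>v. (\<Sum>b\<in>Bpos. c1 b * xmon b v) + d v)"
    using assms unfolding box_span_def by blast
  then show ?thesis
    by (intro box_spanI[where c = "\<lambda>b. c * c1 b", OF DImg_scale])
      (simp_all add: algebra_simps sum_distrib_left)
qed

lemma DI_subset_box_span: "d \<in> DI \<Longrightarrow> d \<in> box_span"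
  by (rule box_spanI[where c = "\<lambda>_. 0"]) simp_all

lemma xmon_Bpos_in_box_span:
  assumes "b \<in> Bpos"
  shows "xmon b \<in> box_span"
proof (rule box_spanI[OF DImg_zero, where c = "\<lambda>b'. if b' = b then 1 else 0"])
  fix v
  have "(\<Sum>b'\<in>Bpos. (if b' = b then 1 else 0) * xmon b' v) = (\<Sum>b'\<in>Bpos. if b' = b then xmon b' v else 0)"
    by (intro sum.cong) auto
  then show "xmon b v = (\<Sum>b'\<in>Bpos. (if b' = b then 1 else 0) * xmon b' v) + 0"
    using assms finite_Bpos by simp
qed

definition trade :: "nat \<Rightarrow> int ^ 'n \<Rightarrow> int ^ 'n" where
  "trade j u = u - a j + a 0"

lemma trade_interior:
  assumes u: "u \<in> Mk" "interior_pt u" and j: "j \<in> {1..m}" "1 \<le> coord j u"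
  shows "trade j u \<in> Mk" "interior_pt (trade j u)" "weight (trade j u) = weight u"
proof -
  have pos: "0 < coord k (trade j u)" if k: "k \<in> {1..m}" for k
  proof -
    have "coord k (trade j u) = coord k u - (if k = j then 1 else 0) + real (l k) / real (l 0)"
      unfolding trade_def using k j by (simp add: coord_add coord_diff coord_a coord_a0)
    moreover have "0 < real (l k) / real (l 0)"
      using l_pos k l0_pos by auto
    moreover have "0 < coord k u"
      using u(2) k unfolding interior_pt_def by blast
    ultimately show ?thesis
      using j(2) by auto
  qed
  have "trade j u \<in> Ck"
    unfolding trade_def using u(1) j(1) by (intro Ck_add_a Ck_diff_a) auto
  then show "trade j u \<in> Mk"
    using pos unfolding Mk_iff by (auto intro: less_imp_le)
  show "interior_pt (trade j u)"
    using pos unfolding interior_pt_def by blast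
  show "weight (trade j u) = weight u"
    unfolding trade_def using j by (simp add: weight_add weight_diff weight_a weight_a0)
qed

lemma trade_in_box_span:
  assumes u: "u \<in> Mk" "interior_pt u" and j: "j \<in> {1..m}" "1 \<le> coord j u"
    and IH: "\<And>v. v \<in> Mk \<Longrightarrow> interior_pt v \<Longrightarrow> weight v < weight u \<Longrightarrow> xmon v \<in> box_span"
  shows "(\<lambda>x. xmon u x - lam * xmon (trade j u) x) \<in> box_span"
proof -
  define v where "v = u - a j"
  define c where "c = coord j v"
  define L where "L = l j"
  have coord_v: "coord k v = coord k u - (if k = j then 1 else 0)" if "k \<in> {1..m}" for k
    unfolding v_def using that j by (simp add: coord_diff coord_a)
  have v_nonneg: "0 \<le> coord k v" if "k \<in> {1..m}" for k
  proof -
    have "0 < coord k u"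
      using u(2) that unfolding interior_pt_def by blast
    then show ?thesis
      using coord_v[OF that] j(2) by simp
  qed
  have v_Mk: "v \<in> Mk"
    unfolding Mk_iff v_def using u(1) j(1) v_nonneg Ck_diff_a by (auto simp: Mk_iff v_def)
  have "of_real_K (1 / real L) * of_nat L = of_real_K (1 / real L * real L)"
    by (simp only: of_real_K_mult of_real_K_of_nat)
  also have "\<dots> = 1"
    using l_pos j by (simp add: L_def)
  finally have L: "of_real_K (1 / real L) * of_nat L = 1" .
  \<comment> \<open>Apply \<open>D'_j\<close> to \<open>x^v\<close>; its first term is handled by induction on the weight.\<close>
  define D where "D x = of_real_K (coord j x) * xmon v x + of_nat L * xmon v (x - a j)
    - of_nat L * lam * xmon v (x - a 0)" for x
  have D: "(\<lambda>x. of_real_K (1 / real L) * D x) \<in> box_span"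
    unfolding D_def L_def
    using sum_dual_Dop_in_DI[OF j(1) Sk_xmon[OF v_Mk]] by (intro DI_subset_box_span DImg_scale)
  have first: "(\<lambda>x. of_real_K (- (c / real L)) * xmon v x) \<in> box_span"
  proof (cases "c = 0")
    case True
    then show ?thesis using DI_subset_box_span[OF DImg_zero] by simp
  next
    case False
    then have "interior_pt v"
      using v_nonneg[OF j(1)] coord_v u(2) unfolding c_def interior_pt_def by force
    moreover have "weight v < weight u"
      unfolding v_def using j by (simp add: weight_diff weight_a)
    ultimately show ?thesis
      using IH v_Mk box_span_scale by blast
  qed
  have "(\<lambda>x. of_real_K (1 / real L) * D x + of_real_K (- (c / real L)) * xmon v x)
      = (\<lambda>x. xmon u x - lam * xmon (trade j u) x)"
  proof
    fix x
    have x1: "xmon v (x - a j) = xmon u x" and x2: "xmon v (x - a 0) = xmon (trade j u) x"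
      unfolding xmon_def v_def trade_def by (auto simp: algebra_simps)
    have x3: "of_real_K (coord j x) * xmon v x = of_real_K c * xmon v x"
      unfolding xmon_def c_def by simp
    have "of_real_K (1 / real L) * D x
        = (of_real_K (1 / real L) * of_real_K c) * xmon v x + (of_real_K (1 / real L) * of_nat L) * xmon u x
          - (of_real_K (1 / real L) * of_nat L) * lam * xmon (trade j u) x"
      unfolding D_def x1 x2 x3 by (simp add: algebra_simps)
    also have "\<dots> = of_real_K (c / real L) * xmon v x + xmon u x - lam * xmon (trade j u) x"
      unfolding L by (simp flip: of_real_K_mult)
    finally show "of_real_K (1 / real L) * D x + of_real_K (- (c / real L)) * xmon v x
        = xmon u x - lam * xmon (trade j u) x"
      by (simp add: of_real_K_uminus)
  qed
  then show ?thesis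
    using box_span_add[OF D first] by simp
qed

lemma interior_not_Bpos_imp_coord_ge_1:
  assumes "u \<in> Mk" "interior_pt u" "u \<notin> Bpos"
  shows "\<exists>j\<in>{1..m}. 1 \<le> coord j u"
proof (rule ccontr)
  assume "\<not> (\<exists>j\<in>{1..m}. 1 \<le> coord j u)"
  then have "\<forall>j\<in>{1..m}. coord j u < 1"
    by (simp add: not_le)
  then have "u \<in> Bpos"
    using assms(1,2) unfolding Bpos_iff Mk_iff interior_pt_def by blast
  then show False
    using assms(3) by blast
qed

lemma interior_in_box_span_of_level:
  assumes IH: "\<And>v. v \<in> Mk \<Longrightarrow> interior_pt v \<Longrightarrow> weight v < W \<Longrightarrow> xmon v \<in> box_span"
    and u: "u \<in> Mk" "interior_pt u" "weight u = W"
  shows "xmon u \<in> box_span"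
proof -
  define N where "N = {u \<in> Mk. interior_pt u \<and> weight u = W}"
  define js where "js u = (SOME j. j \<in> {1..m} \<and> 1 \<le> coord j u)" for u
  have trade_N: "xmon u \<in> box_span \<or>
      (trade (js u) u \<in> N \<and> (\<lambda>x. xmon u x - lam * xmon (trade (js u) u) x) \<in> box_span)"
    if uN: "u \<in> N" for u
  proof (cases "u \<in> Bpos")
    case True
    then show ?thesis using xmon_Bpos_in_box_span by blast
  next
    case False
    then have "\<exists>j. j \<in> {1..m} \<and> 1 \<le> coord j u"
      using interior_not_Bpos_imp_coord_ge_1 uN unfolding N_def by blast
    then have js: "js u \<in> {1..m} \<and> 1 \<le> coord (js u) u"
      unfolding js_def by (rule someI_ex)
    have "trade (js u) u \<in> N"
      using trade_interior[of u "js u"] js uN unfolding N_def by auto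
    moreover have "(\<lambda>x. xmon u x - lam * xmon (trade (js u) u) x) \<in> box_span"
      using uN IH js by (intro trade_in_box_span) (auto simp: N_def)
    ultimately show ?thesis by blast
  qed
  show ?thesis
  proof (rule lam_cycle_closed[where N = N and f = "\<lambda>u. trade (js u) u"])
    show "finite N"
      using finite_bounded_weight[of W] by (rule finite_subset[rotated]) (auto simp: N_def)
    show "u \<in> N"
      using u by (simp add: N_def)
  qed (use box_span_add box_span_scale trade_N in blast)+
qed

lemma interior_in_box_span: "u \<in> Mk \<Longrightarrow> interior_pt u \<Longrightarrow> xmon u \<in> box_span"
proof (induction u rule: measure_induct_rule[where f = "\<lambda>u. card {v \<in> Mk. weight v < weight u}"])
  case (less u)
  show ?case
  proof (rule interior_in_box_span_of_level[OF _ less.prems refl])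
    fix v assume v: "v \<in> Mk" "interior_pt v" "weight v < weight u"
    have "finite {x \<in> Mk. weight x < weight u}"
      using finite_bounded_weight[of "weight u"] by (rule finite_subset[rotated]) auto
    moreover have "{x \<in> Mk. weight x < weight v} \<subset> {x \<in> Mk. weight x < weight u}"
      using v by auto
    ultimately have "card {x \<in> Mk. weight x < weight v} < card {x \<in> Mk. weight x < weight u}"
      by (simp add: psubset_card_mono)
    then show "xmon v \<in> box_span"
      using less.IH v by blast
  qed
qed

end

section \<open>Independence of the box monomials\<close>

context circuit_coset
begin

definition Dop_poly :: "'n \<Rightarrow> (int ^ 'n \<Rightarrow> complex poly) \<Rightarrow> int ^ 'n \<Rightarrow> complex poly" where
  "Dop_poly i g v = [:of_int (v $ i):] * g v
      + (\<Sum>j=1..m. [:of_int (int (l j) * a j $ i):] * g (v - a j))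
      - [:of_int (int (l 0) * a 0 $ i):] * [:0, 1:] * g (v - a 0)"

lemma Dop_to_fract: "Dop a l m i (\<lambda>v. to_fract (g v)) v = to_fract (Dop_poly i g v)"
  unfolding Dop_def Dop_poly_def
  by (simp only: to_fract_add to_fract_diff to_fract_mult to_fract_sum to_fract_const_of_int
      lam_eq_to_fract)

lemma relation_clear_denominators:
  assumes hD: "h \<in> DI" and h: "\<And>v. h v = (if v \<in> Bpos then C v else 0)"
  obtains Q Cp Gp where "Q \<noteq> 0" "\<forall>b\<in>Bpos. to_fract (Cp b) = to_fract Q * C b"
    "\<forall>i. finite {v. Gp i v \<noteq> 0} \<and> {v. Gp i v \<noteq> 0} \<subseteq> Mk"
    "\<forall>v. (if v \<in> Bpos then Cp v else 0) = (\<Sum>i\<in>UNIV. Dop_poly i (Gp i) v)"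
proof -
  obtain G where G: "\<forall>i. G i \<in> Sk Mk" and h_G: "h = (\<lambda>v. \<Sum>i\<in>UNIV. Dop a l m i (G i) v)"
    using hD unfolding DImg_def by blast
  define S where "S = insert 0 (C ` Bpos \<union> (\<Union>i. G i ` {v. G i v \<noteq> 0}))"
  have "finite S"
    unfolding S_def using finite_Bpos G unfolding Sk_def by auto
  then obtain Q num where Q: "Q \<noteq> 0" and num: "\<And>x. x \<in> S \<Longrightarrow> to_fract (num x) = to_fract Q * x"
    using fract_clear_denominators by blast
  define Gp where "Gp i v = num (G i v)" for i v
  have Gp: "to_fract (Gp i v) = to_fract Q * G i v" for i v
    unfolding Gp_def by (rule num) (auto simp: S_def)
  have Cp: "\<forall>b\<in>Bpos. to_fract (num (C b)) = to_fract Q * C b"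
    using num by (simp add: S_def)
  have "{v. Gp i v \<noteq> 0} \<subseteq> {v. G i v \<noteq> 0}" for i
  proof
    fix v assume "v \<in> {v. Gp i v \<noteq> 0}"
    then have "to_fract (Gp i v) \<noteq> 0" by simp
    then show "v \<in> {v. G i v \<noteq> 0}" unfolding Gp by auto
  qed
  then have supp: "\<forall>i. finite {v. Gp i v \<noteq> 0} \<and> {v. Gp i v \<noteq> 0} \<subseteq> Mk"
    using G unfolding Sk_def by (blast intro: finite_subset)
  have "(if v \<in> Bpos then num (C v) else 0) = (\<Sum>i\<in>UNIV. Dop_poly i (Gp i) v)" for v
  proof -
    have "to_fract (if v \<in> Bpos then num (C v) else 0) = to_fract Q * h v"
      unfolding h using Cp by simp
    also have "\<dots> = (\<Sum>i\<in>UNIV. Dop a l m i (\<lambda>v. to_fract (Gp i v)) v)"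
      unfolding h_G Gp by (simp add: Dop_scale sum_distrib_left)
    also have "\<dots> = to_fract (\<Sum>i\<in>UNIV. Dop_poly i (Gp i) v)"
      unfolding Dop_to_fract by simp
    finally show ?thesis by (simp only: to_fract_eq_iff)
  qed
  with Q Cp supp show ?thesis
    by (intro that[of Q "\<lambda>b. num (C b)" Gp]) auto
qed

text \<open>The constant term \<open>P_e\<close> of the dual solution \<open>\<Phi>_e\<close>: in coordinates, \<open>P_e\<close> is supported on
  \<open>e + \<nat>^m\<close>, \<open>P_e(e) = 1\<close>, and \<open>l_j P_e(x + a_j) = - x_j P_e(x)\<close>.\<close>

definition above :: "int ^ 'n \<Rightarrow> int ^ 'n \<Rightarrow> bool" where
  "above e x \<longleftrightarrow> (\<forall>j\<in>{1..m}. \<exists>n::nat. coord j x = coord j e + real n)"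

definition excess :: "int ^ 'n \<Rightarrow> int ^ 'n \<Rightarrow> nat \<Rightarrow> nat" where
  "excess e x j = nat \<lfloor>coord j x - coord j e\<rfloor>"

definition dual_sol_const_factor :: "int ^ 'n \<Rightarrow> nat \<Rightarrow> nat \<Rightarrow> real" where
  "dual_sol_const_factor e j n = (- 1 / real (l j)) ^ n * pochhammer (coord j e) n"

definition dual_sol_const :: "int ^ 'n \<Rightarrow> int ^ 'n \<Rightarrow> real" where
  "dual_sol_const e x = (if above e x then (\<Prod>j=1..m. dual_sol_const_factor e j (excess e x j)) else 0)"

lemma dual_sol_const_factor_Suc:
  "dual_sol_const_factor e j (Suc n) = - 1 / real (l j) * (coord j e + real n) * dual_sol_const_factor e j n"
  by (simp add: dual_sol_const_factor_def pochhammer_Suc mult_ac)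

lemma excess_eq: "coord j x = coord j e + real n \<Longrightarrow> excess e x j = n"
  unfolding excess_def by simp

lemma coord_add_a: "k \<in> {1..m} \<Longrightarrow> j \<in> {1..m} \<Longrightarrow> coord k (x + a j) = coord k x + (if k = j then 1 else 0)"
  by (simp add: coord_add coord_a)

lemma dual_sol_const_step_above:
  assumes j: "j \<in> {1..m}" and above: "above e x"
  shows "real (l j) * dual_sol_const e (x + a j) = - coord j x * dual_sol_const e x"
proof -
  obtain n where n: "\<And>k. k \<in> {1..m} \<Longrightarrow> coord k x = coord k e + real (n k)"
    using above unfolding above_def by metis
  have n_a: "coord k (x + a j) = coord k e + real (n k + (if k = j then 1 else 0))" if "k \<in> {1..m}" for k
    using coord_add_a[OF that j, of x] n[OF that] by simp
  then have above_a: "above e (x + a j)"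
    unfolding above_def by blast
  have "dual_sol_const e (x + a j) = (\<Prod>k=1..m. dual_sol_const_factor e k (excess e (x + a j) k))"
    using above_a by (simp add: dual_sol_const_def)
  also have "\<dots> = - 1 / real (l j) * coord j x * (\<Prod>k=1..m. dual_sol_const_factor e k (excess e x k))"
  proof (rule prod_update_factor)
    show "dual_sol_const_factor e k (excess e (x + a j) k) = dual_sol_const_factor e k (excess e x k)"
      if "k \<in> {1..m}" "k \<noteq> j" for k
      using that excess_eq[OF n_a] excess_eq[OF n] by simp
    show "dual_sol_const_factor e j (excess e (x + a j) j) = - 1 / real (l j) * coord j x * dual_sol_const_factor e j (excess e x j)"
      using j excess_eq[OF n_a] excess_eq[OF n] n by (simp add: dual_sol_const_factor_Suc)
  qed (use j in simp_all)
  also have "\<dots> = - 1 / real (l j) * coord j x * dual_sol_const e x"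
    using above by (simp add: dual_sol_const_def)
  finally show ?thesis
    using l_pos j by (simp add: field_simps)
qed

lemma above_add_a_imp_above:
  assumes e: "e \<in> Bpos" and j: "j \<in> {1..m}" and x: "0 \<le> coord j x" and above: "above e (x + a j)"
  shows "above e x"
proof -
  obtain n where n: "\<And>k. k \<in> {1..m} \<Longrightarrow> coord k (x + a j) = coord k e + real (n k)"
    using above unfolding above_def by metis
  have "coord j e < 1"
    using e j unfolding Bpos_iff by blast
  then have "n j \<noteq> 0"
    using n[OF j] coord_add_a[OF j j, of x] x by auto
  have "\<exists>n'::nat. coord k x = coord k e + real n'" if k: "k \<in> {1..m}" for k
  proof (cases "k = j")
    case True
    then have "coord k x = coord k e + real (n j - 1)"
      using n[OF j] coord_add_a[OF j j, of x] \<open>n j \<noteq> 0\<close> by (simp add: of_nat_diff)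
    then show ?thesis by blast
  next
    case False
    then have "coord k x = coord k e + real (n k)"
      using n[OF k] coord_add_a[OF k j, of x] by simp
    then show ?thesis by blast
  qed
  then show ?thesis
    unfolding above_def by blast
qed

lemma dual_sol_const_step:
  assumes e: "e \<in> Bpos" and j: "j \<in> {1..m}" and x: "0 \<le> coord j x"
  shows "real (l j) * dual_sol_const e (x + a j) = - coord j x * dual_sol_const e x"
proof (cases "above e x")
  case True
  then show ?thesis by (rule dual_sol_const_step_above[OF j])
next
  case False
  then have "\<not> above e (x + a j)"
    using above_add_a_imp_above[OF e j x] by blast
  then show ?thesis
    unfolding dual_sol_const_def using False by simp
qed

lemma dual_sol_const_Bpos:
  assumes b: "b \<in> Bpos" and e: "e \<in> Bpos"
  shows "dual_sol_const e b = (if b = e then 1 else 0)"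
proof (cases "above e b")
  case True
  then obtain n where n: "\<And>k. k \<in> {1..m} \<Longrightarrow> coord k b = coord k e + real (n k)"
    unfolding above_def by metis
  have n0: "n k = 0" if k: "k \<in> {1..m}" for k
  proof -
    have "coord k b < 1" "0 < coord k e" using b e k unfolding Bpos_iff by auto
    then show ?thesis using n[OF k] by simp
  qed
  have "\<forall>j\<in>{1..m}. coord j b = coord j e" using n n0 by simp
  then have "b = e" using Bpos_eq b e by blast
  moreover have "dual_sol_const e e = 1"
  proof -
    have "above e e" unfolding above_def by (intro ballI exI[of _ 0]) simp
    moreover have "excess e e k = 0" for k unfolding excess_def by simp
    ultimately show ?thesis unfolding dual_sol_const_def by (simp add: dual_sol_const_factor_def)
  qed
  ultimately show ?thesis by simp
next
  case False
  moreover have "above e e" unfolding above_def by (intro ballI exI[of _ 0]) simp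
  ultimately have "b \<noteq> e" by blast
  then show ?thesis unfolding dual_sol_const_def using False by simp
qed


definition shift_a0 :: "nat \<Rightarrow> int ^ 'n \<Rightarrow> int ^ 'n" where
  "shift_a0 k u = u + (\<chi> i. int k * a 0 $ i)"

lemma coord_shift_a0: "coord j (shift_a0 k u) = coord j u + real k * coord j (a 0)"
proof -
  have "rv (\<chi> i. int k * a 0 $ i) = real k *\<^sub>R rv (a 0)" by (simp add: rv_def vec_eq_iff)
  then show ?thesis unfolding shift_a0_def coord_add by (simp add: coord_def)
qed

lemma shift_a0_add: "shift_a0 k (u + a j) = shift_a0 k u + a j"
  unfolding shift_a0_def by (simp add: algebra_simps)

lemma shift_a0_Suc: "shift_a0 k (u + a 0) = shift_a0 (Suc k) u"
  unfolding shift_a0_def by (simp add: vec_eq_iff algebra_simps)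

lemma shift_a0_0: "shift_a0 0 u = u"
  unfolding shift_a0_def by (simp add: vec_eq_iff)

text \<open>\<open>\<Phi>_e(u) = \<Sum>_k (-l_0)^k/k! P_e(u + k a_0) \<lambda>^k\<close>, the solution of the adjoint system with
  constant term \<open>P_e\<close>.\<close>

primrec exp_coeff :: "nat \<Rightarrow> real" where
  "exp_coeff 0 = 1"
| "exp_coeff (Suc k) = - real (l 0) * exp_coeff k / real (Suc k)"

lemma exp_coeff_Suc: "exp_coeff (Suc k) * real (Suc k) / real (l 0) = - exp_coeff k"
proof -
  have l0: "real (l 0) \<noteq> 0" using l0_pos by simp
  have "exp_coeff (Suc k) * real (Suc k) = - real (l 0) * exp_coeff k" by simp
  then show ?thesis using l0 by simp
qed

definition dual_sol :: "int ^ 'n \<Rightarrow> int ^ 'n \<Rightarrow> complex fps" where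
  "dual_sol e u = Abs_fps (\<lambda>k. complex_of_real (exp_coeff k * dual_sol_const e (shift_a0 k u)))"

definition adj_coord :: "int ^ 'n \<Rightarrow> nat \<Rightarrow> int ^ 'n \<Rightarrow> complex fps" where
  "adj_coord e j v = fps_const (complex_of_real (coord j v)) * dual_sol e v
     + fps_const (of_nat (l j)) * dual_sol e (v + a j)
     - fps_const (of_nat (l j)) * (fps_X * dual_sol e (v + a 0))"

lemma adj_coord_coeff:
  assumes e: "e \<in> Bpos" and j: "j \<in> {1..m}" and v: "v \<in> Mk"
  defines "P \<equiv> \<lambda>k u. exp_coeff k * dual_sol_const e (shift_a0 k u)"
  shows "coord j v * P k v + real (l j) * P k (v + a j)
    - real (l j) * (if k = 0 then 0 else P (k - 1) (v + a 0)) = 0"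
proof -
  define W where "W = shift_a0 k v"
  have coord_W: "coord j W = coord j v + real k * (real (l j) / real (l 0))"
    unfolding W_def coord_shift_a0 using coord_a0[OF j] by simp
  have "0 \<le> coord j v"
    using v j unfolding Mk_iff by blast
  moreover have "0 \<le> real k * (real (l j) / real (l 0))"
    by simp
  ultimately have "0 \<le> coord j W"
    using coord_W by linarith
  then have step: "real (l j) * dual_sol_const e (W + a j) = - coord j W * dual_sol_const e W"
    by (rule dual_sol_const_step[OF e j])
  have P_v: "P k v = exp_coeff k * dual_sol_const e W"
    by (simp add: P_def W_def)
  have "real (l j) * P k (v + a j) = exp_coeff k * (real (l j) * dual_sol_const e (W + a j))"
    by (simp add: P_def W_def shift_a0_add mult.left_commute)
  also have "\<dots> = - exp_coeff k * coord j W * dual_sol_const e W"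
    by (simp add: step)
  finally have P_a: "real (l j) * P k (v + a j) = - exp_coeff k * coord j W * dual_sol_const e W" .
  show ?thesis
  proof (cases k)
    case 0
    then show ?thesis
      using P_v P_a coord_W by simp
  next
    case (Suc k')
    have "P k' (v + a 0) = exp_coeff k' * dual_sol_const e W"
      unfolding P_def W_def Suc by (simp add: shift_a0_Suc)
    then have "coord j v * P k v + real (l j) * P k (v + a j) - real (l j) * P k' (v + a 0)
        = - real (l j) * dual_sol_const e W * (exp_coeff (Suc k') * real (Suc k') / real (l 0) + exp_coeff k')"
      unfolding P_v P_a coord_W using l0_pos Suc by (simp del: exp_coeff.simps add: field_simps)
    also have "\<dots> = 0"
      unfolding exp_coeff_Suc by simp
    finally show ?thesis
      using Suc by simp
  qed
qed

lemma adj_coord_eq_0: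
  assumes e: "e \<in> Bpos" and j: "j \<in> {1..m}" and v: "v \<in> Mk"
  shows "adj_coord e j v = 0"
proof (rule fps_ext)
  fix k
  have "fps_nth (adj_coord e j v) k = complex_of_real (coord j v * (exp_coeff k * dual_sol_const e (shift_a0 k v)) + real (l j) * (exp_coeff k * dual_sol_const e (shift_a0 k (v + a j)))
     - real (l j) * (if k = 0 then 0 else exp_coeff (k - 1) * dual_sol_const e (shift_a0 (k - 1) (v + a 0))))"
    unfolding adj_coord_def dual_sol_def by simp
  also have "\<dots> = 0" unfolding adj_coord_coeff[OF e j v] by simp
  finally show "fps_nth (adj_coord e j v) k = fps_nth 0 k" by simp
qed

definition adj_D :: "int ^ 'n \<Rightarrow> 'n \<Rightarrow> int ^ 'n \<Rightarrow> complex fps" where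
  "adj_D e i v = fps_const (of_int (v $ i)) * dual_sol e v
     + (\<Sum>j=1..m. fps_const (of_int (int (l j) * a j $ i)) * dual_sol e (v + a j))
     - fps_const (of_int (int (l 0) * a 0 $ i)) * (fps_X * dual_sol e (v + a 0))"

lemma adj_D_eq_0:
  assumes e: "e \<in> Bpos" and v: "v \<in> Mk"
  shows "adj_D e i v = 0"
proof -
  have v_VZ: "v \<in> VZ a m" using v Mk_iff Ck_VZ by blast
  have v_comp: "(of_int (v $ i) :: complex) = (\<Sum>j=1..m. of_int (a j $ i) * complex_of_real (coord j v))"
  proof -
    have "(of_int (v $ i) :: complex) = complex_of_real (real_of_int (v $ i))" by simp
    also have "\<dots> = complex_of_real (\<Sum>j=1..m. coord j v * real_of_int (a j $ i))"
      unfolding coord_expansion_component[OF v_VZ] ..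
    also have "\<dots> = (\<Sum>j=1..m. of_int (a j $ i) * complex_of_real (coord j v))" by (simp add: mult.commute)
    finally show ?thesis .
  qed
  have a0_comp: "(of_int (int (l 0) * a 0 $ i) :: complex) = (\<Sum>j=1..m. of_int (a j $ i) * of_nat (l j))"
  proof -
    have "int (l 0) * a 0 $ i = (\<Sum>j=1..m. int (l j) * a j $ i)"
      using arg_cong[OF rel, of "\<lambda>v. v $ i"] by simp
    then have "(of_int (int (l 0) * a 0 $ i) :: complex) = of_int (\<Sum>j=1..m. int (l j) * a j $ i)" by simp
    then show ?thesis by (simp add: mult.commute)
  qed
  have "adj_D e i v = (\<Sum>j=1..m. fps_const (of_int (a j $ i)) * adj_coord e j v)"
  proof (rule fps_ext)
    fix k
    define p where "p = fps_nth (dual_sol e v) k"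
    define q where "q j = fps_nth (dual_sol e (v + a j)) k" for j
    define r where "r = fps_nth (fps_X * dual_sol e (v + a 0)) k"
    have "fps_nth (adj_D e i v) k = of_int (v $ i) * p + (\<Sum>j=1..m. of_int (int (l j) * a j $ i) * q j)
        - of_int (int (l 0) * a 0 $ i) * r"
      unfolding adj_D_def p_def q_def r_def by (simp add: fps_sum_nth del: fps_X_mult_nth)
    also have "\<dots> = (\<Sum>j=1..m. of_int (a j $ i) * complex_of_real (coord j v)) * p
        + (\<Sum>j=1..m. of_int (a j $ i) * of_nat (l j) * q j) - (\<Sum>j=1..m. of_int (a j $ i) * of_nat (l j)) * r"
      unfolding v_comp a0_comp by (simp add: mult.commute)
    also have "\<dots> = (\<Sum>j=1..m. of_int (a j $ i)
        * (complex_of_real (coord j v) * p + of_nat (l j) * q j - of_nat (l j) * r))"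
      by (simp add: algebra_simps sum.distrib sum_subtractf sum_distrib_left sum_distrib_right)
    also have "\<dots> = fps_nth (\<Sum>j=1..m. fps_const (of_int (a j $ i)) * adj_coord e j v) k"
    proof -
      have adj_coord_nth: "fps_nth (adj_coord e j v) k
          = complex_of_real (coord j v) * p + of_nat (l j) * q j - of_nat (l j) * r" for j
        unfolding adj_coord_def p_def q_def r_def by (simp del: fps_X_mult_nth)
      show ?thesis by (simp add: fps_sum_nth adj_coord_nth)
    qed
    finally show "fps_nth (adj_D e i v) k
        = fps_nth (\<Sum>j=1..m. fps_const (of_int (a j $ i)) * adj_coord e j v) k" .
  qed
  also have "\<dots> = 0" using adj_coord_eq_0[OF e _ v] by simp
  finally show ?thesis .
qed


lemma fps_of_poly_Dop_poly: "fps_of_poly (Dop_poly i g u) = fps_const (of_int (u $ i)) * fps_of_poly (g u)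
   + (\<Sum>j=1..m. fps_const (of_int (int (l j) * a j $ i)) * fps_of_poly (g (u - a j)))
   - fps_const (of_int (int (l 0) * a 0 $ i)) * fps_X * fps_of_poly (g (u - a 0))"
  unfolding Dop_poly_def by (simp only: fps_of_poly_add fps_of_poly_diff fps_of_poly_mult fps_of_poly_sum fps_of_poly_const fps_of_poly_fps_X)

lemma pairing_Dop_poly:
  assumes e: "e \<in> Bpos" and S: "finite S" "S \<subseteq> Mk" and g: "\<And>v. v \<notin> S \<Longrightarrow> g v = 0"
    and F: "finite F" and sub: "\<And>t. t \<in> insert 0 (a ` {0..m}) \<Longrightarrow> (\<lambda>v. v + t) ` S \<subseteq> F"
  shows "(\<Sum>u\<in>F. fps_of_poly (Dop_poly i g u) * dual_sol e u) = 0"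
proof -
  define fg where "fg v = fps_of_poly (g v)" for v
  have fg0: "fg v = 0" if "v \<notin> S" for v unfolding fg_def using g[OF that] by simp
  have sub0: "(\<lambda>v. v + 0) ` S \<subseteq> F" using sub[of 0] by simp
  have subj: "(\<lambda>v. v + a j) ` S \<subseteq> F" if "j \<le> m" for j using sub[of "a j"] that by simp
  have shift_0: "(\<Sum>u\<in>F. fg u * (fps_const (of_int (u $ i)) * dual_sol e u))
      = (\<Sum>v\<in>S. fg v * (fps_const (of_int (v $ i)) * dual_sol e v))"
    using sum_shift_support[OF F S(1) fg0 sub0, where h="\<lambda>u. fps_const (of_int (u $ i)) * dual_sol e u"] by simp
  have shift_a: "(\<Sum>u\<in>F. fg (u - a j) * dual_sol e u) = (\<Sum>v\<in>S. fg v * dual_sol e (v + a j))"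
    if "j \<le> m" for j
    using sum_shift_support[OF F S(1) fg0 subj[OF that]] .
  have "(\<Sum>u\<in>F. fps_of_poly (Dop_poly i g u) * dual_sol e u)
      = (\<Sum>u\<in>F. fg u * (fps_const (of_int (u $ i)) * dual_sol e u))
        + (\<Sum>j=1..m. fps_const (of_int (int (l j) * a j $ i)) * (\<Sum>u\<in>F. fg (u - a j) * dual_sol e u))
        - fps_const (of_int (int (l 0) * a 0 $ i)) * fps_X * (\<Sum>u\<in>F. fg (u - a 0) * dual_sol e u)"
    unfolding fps_of_poly_Dop_poly fg_def[symmetric]
    by (simp add: algebra_simps sum.distrib sum_subtractf sum_distrib_left sum_distrib_right sum.swap[of _ F])
  also have "\<dots> = (\<Sum>v\<in>S. fg v * (fps_const (of_int (v $ i)) * dual_sol e v))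
        + (\<Sum>j=1..m. fps_const (of_int (int (l j) * a j $ i)) * (\<Sum>v\<in>S. fg v * dual_sol e (v + a j)))
        - fps_const (of_int (int (l 0) * a 0 $ i)) * fps_X * (\<Sum>v\<in>S. fg v * dual_sol e (v + a 0))"
    using shift_0 shift_a by simp
  also have "\<dots> = (\<Sum>v\<in>S. fg v * adj_D e i v)"
    unfolding adj_D_def
    by (simp add: algebra_simps sum.distrib sum_subtractf sum_distrib_left sum_distrib_right sum.swap[of _ S])
  also have "\<dots> = 0" using adj_D_eq_0[OF e] S(2) by (intro sum.neutral) auto
  finally show ?thesis .
qed


lemma dual_sol_nth_0: "fps_nth (dual_sol e b) 0 = complex_of_real (dual_sol_const e b)"
  unfolding dual_sol_def by (simp add: shift_a0_0)

lemma dual_sol_pairing: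
  assumes e: "e \<in> Bpos"
    and Gp: "\<forall>i. finite {v. Gp i v \<noteq> 0} \<and> {v. Gp i v \<noteq> 0} \<subseteq> Mk"
    and eq: "\<forall>v. (if v \<in> Bpos then Cp v else 0) = (\<Sum>i\<in>UNIV. Dop_poly i (Gp i) v)"
  shows "(\<Sum>b\<in>Bpos. fps_of_poly (Cp b) * dual_sol e b) = 0"
proof -
  define T where "T = insert 0 (a ` {0..m})"
  define F where "F = Bpos \<union> (\<Union>i. \<Union>t\<in>T. (\<lambda>v. v + t) ` {v. Gp i v \<noteq> 0})"
  have finF: "finite F" unfolding F_def T_def using finite_Bpos Gp by auto
  have "(\<Sum>b\<in>Bpos. fps_of_poly (Cp b) * dual_sol e b) = (\<Sum>u\<in>F \<inter> Bpos. fps_of_poly (Cp u) * dual_sol e u)"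
  proof -
    have "F \<inter> Bpos = Bpos" unfolding F_def by blast
    then show ?thesis by simp
  qed
  also have "\<dots> = (\<Sum>u\<in>F. if u \<in> Bpos then fps_of_poly (Cp u) * dual_sol e u else 0)"
    using finF by (rule sum.inter_restrict)
  also have "\<dots> = (\<Sum>u\<in>F. fps_of_poly (if u \<in> Bpos then Cp u else 0) * dual_sol e u)"
    by (intro sum.cong) auto
  also have "\<dots> = (\<Sum>u\<in>F. fps_of_poly (\<Sum>i\<in>UNIV. Dop_poly i (Gp i) u) * dual_sol e u)"
    using eq by simp
  also have "\<dots> = (\<Sum>i\<in>UNIV. \<Sum>u\<in>F. fps_of_poly (Dop_poly i (Gp i) u) * dual_sol e u)"
    by (simp add: fps_of_poly_sum sum_distrib_right sum.swap[of _ F])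
  also have "\<dots> = 0"
  proof (rule sum.neutral, rule ballI)
    fix i :: 'n
    show "(\<Sum>u\<in>F. fps_of_poly (Dop_poly i (Gp i) u) * dual_sol e u) = 0"
    proof (rule pairing_Dop_poly[OF e])
      show "finite {v. Gp i v \<noteq> 0}" "{v. Gp i v \<noteq> 0} \<subseteq> Mk" using Gp by auto
      show "\<And>v. v \<notin> {v. Gp i v \<noteq> 0} \<Longrightarrow> Gp i v = 0" by simp
      show "finite F" by (rule finF)
      fix t assume "t \<in> insert 0 (a ` {0..m})"
      then show "(\<lambda>v. v + t) ` {v. Gp i v \<noteq> 0} \<subseteq> F" unfolding F_def T_def by blast
    qed
  qed
  finally show ?thesis .
qed


lemma box_independent:
  assumes hD: "(\<lambda>v. \<Sum>b\<in>Bpos. C b * xmon b v) \<in> DI"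
  shows "\<forall>b\<in>Bpos. C b = 0"
proof -
  have hv: "(\<Sum>b\<in>Bpos. C b * xmon b v) = (if v \<in> Bpos then C v else 0)" for v
  proof -
    have "(\<Sum>b\<in>Bpos. C b * xmon b v) = (\<Sum>b\<in>Bpos. if v = b then C b else 0)"
      unfolding xmon_def by (intro sum.cong) auto
    also have "\<dots> = (if v \<in> Bpos then C v else 0)" using finite_Bpos by (simp add: sum.delta)
    finally show ?thesis .
  qed
  obtain Q Cp Gp where Q: "Q \<noteq> 0" and Cp: "\<forall>b\<in>Bpos. to_fract (Cp b) = to_fract Q * C b"
    and Gp: "\<forall>i. finite {v. Gp i v \<noteq> 0} \<and> {v. Gp i v \<noteq> 0} \<subseteq> Mk"
    and eq: "\<forall>v. (if v \<in> Bpos then Cp v else 0) = (\<Sum>i\<in>UNIV. Dop_poly i (Gp i) v)"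
    using relation_clear_denominators[OF hD hv] by blast
  have "\<forall>b\<in>Bpos. fps_of_poly (Cp b) = 0"
  proof (rule fps_pairing_identity_mod_X_imp_zero[OF finite_Bpos])
    show "fps_nth (dual_sol e b) 0 = (if b = e then 1 else 0)" if "e \<in> Bpos" "b \<in> Bpos" for e b
      using dual_sol_const_Bpos[OF that(2,1)] by (simp add: dual_sol_nth_0)
    show "(\<Sum>b\<in>Bpos. fps_of_poly (Cp b) * dual_sol e b) = 0" if "e \<in> Bpos" for e
      using that Gp eq by (rule dual_sol_pairing)
  qed
  show ?thesis
  proof
    fix b assume "b \<in> Bpos"
    then have "to_fract Q * C b = 0"
      using Cp \<open>\<forall>b\<in>Bpos. fps_of_poly (Cp b) = 0\<close> by (metis fps_of_poly_0 fps_of_poly_eq_iff to_fract_0)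
    then show "C b = 0"
      using Q by simp
  qed
qed

end

section \<open>The dimension count\<close>

lemma inj_xmon: "inj xmon"
proof (rule injI)
  fix u v :: "int ^ 'n"
  assume "xmon u = xmon v"
  then have "xmon u u = xmon v u" by simp
  then show "u = v" unfolding xmon_def by (auto split: if_splits)
qed

lemma subset_kspan: "X \<subseteq> kspan X"
proof
  fix f assume "f \<in> X"
  moreover have "f = (\<lambda>v. \<Sum>g\<in>{f}. 1 * g v)" by simp
  ultimately show "f \<in> kspan X"
    unfolding kspan_def by (intro CollectI exI[of _ "{f}"] exI[of _ "\<lambda>_. 1"] conjI) auto
qed

context circuit_coset
begin

lemma xmon_mem_interior_monomials_iff:
  "xmon u \<in> {xmon u | u. u \<in> Mk \<and> rv u \<in> rel_interior (coneA a m)} \<longleftrightarrow> u \<in> Mk \<and> interior_pt u"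
  using inj_xmon rel_interior_coneA_iff Mk_iff Ck_VZ
  unfolding interior_pt_def inj_def by blast

lemma quot_dim_eq_interior:
  "quot_dim_eq DI {xmon u | u. u \<in> Mk \<and> rv u \<in> rel_interior (coneA a m)} (Rk a m Ck)"
proof -
  define X where "X = {xmon u | u. u \<in> Mk \<and> rv u \<in> rel_interior (coneA a m)}"
  define B where "B = xmon ` Bpos"
  have inj: "inj_on xmon Bpos"
    using inj_xmon by (rule inj_on_subset) simp
  have sum_B: "(\<Sum>f\<in>B. c f * f v) = (\<Sum>b\<in>Bpos. c (xmon b) * xmon b v)" for c v
    unfolding B_def by (simp add: sum.reindex[OF inj])
  show ?thesis
    unfolding quot_dim_eq_def X_def[symmetric]
  proof (intro exI[of _ B] conjI allI impI ballI)
    show "finite B"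
      unfolding B_def using finite_Bpos by simp
    show "card B = Rk a m Ck"
      unfolding B_def Rk_eq_card_Bpos by (rule card_image[OF inj])
    have "B \<subseteq> X"
      unfolding B_def X_def using Bpos_interior xmon_mem_interior_monomials_iff by blast
    then show "B \<subseteq> kspan X"
      using subset_kspan by blast
  next
    fix c f
    assume "(\<lambda>v. \<Sum>f\<in>B. c f * f v) \<in> DI" "f \<in> B"
    then have "(\<lambda>v. \<Sum>b\<in>Bpos. c (xmon b) * xmon b v) \<in> DI"
      by (simp only: sum_B)
    then have "\<forall>b\<in>Bpos. c (xmon b) = 0"
      by (rule box_independent)
    then show "c f = 0"
      using \<open>f \<in> B\<close> unfolding B_def by blast
  next
    fix x assume "x \<in> X"
    then obtain u where u: "x = xmon u" "u \<in> Mk" "interior_pt u"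
      using xmon_mem_interior_monomials_iff unfolding X_def by blast
    then obtain c d where "d \<in> DI" "xmon u = (\<lambda>v. (\<Sum>b\<in>Bpos. c b * xmon b v) + d v)"
      using interior_in_box_span unfolding box_span_def by blast
    then have "(\<lambda>v. x v - (\<Sum>f\<in>B. c (inv_into Bpos xmon f) * f v)) \<in> DI"
      unfolding sum_B u(1) by (simp add: inv_into_f_f[OF inj])
    then show "\<exists>c. (\<lambda>v. x v - (\<Sum>f\<in>B. c f * f v)) \<in> DI"
      by (rule exI[of _ "\<lambda>f. c (inv_into Bpos xmon f)"])
  qed
qed

end

theorem proposition9p1:
  fixes a :: "nat \<Rightarrow> int ^ 'n" and l :: "nat \<Rightarrow> nat" and m :: nat
    and w :: "int ^ 'n" and Ck :: "(int ^ 'n) set"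
  assumes inj: "inj_on a {1..m}"
    and indep: "independent (rv ` a ` {1..m})"
    and lpos: "\<forall>j\<in>{0..m}. 0 < l j"
    and lgcd: "Gcd (l ` {0..m}) = 1"
    and rel: "(\<chi> i. int (l 0) * a 0 $ i) = (\<chi> i. \<Sum>j=1..m. int (l j) * a j $ i)"
    and l0: "l 0 = (\<Sum>j=1..m. l j)"
    and coset: "w \<in> VZ a m" "Ck = (\<lambda>g. w + g) ` ZAplus a m"
  shows "quot_dim_eq (DImg a l m (Mset a m \<inter> Ck))
           {xmon u | u. u \<in> Mset a m \<inter> Ck \<and> rv u \<in> rel_interior (coneA a m)}
           (Rk a m Ck)"
proof -
  have "inj_on (\<lambda>k. rv (a k)) {1..m}"
    using inj rv_inj unfolding inj_on_def by metis
  moreover have "independent ((\<lambda>k. rv (a k)) ` {1..m})"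
    using indep by (simp add: image_image)
  ultimately obtain \<phi> :: "nat \<Rightarrow> real ^ 'n"
    where "\<forall>j\<in>{1..m}. \<forall>k\<in>{1..m}. \<phi> j \<bullet> rv (a k) = (if j = k then 1 else 0)"
    using dual_basis_exists by blast
  then interpret circuit_coset a l m w Ck \<phi>
    using lpos rel l0 coset by unfold_locales auto
  show ?thesis
    by (rule quot_dim_eq_interior)
qed

end
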